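(* If $x\mapsto p(x)r(x)$ is increasing on $(a,b)$, then $|w_\lambda(x)|\le 1$ for all $x\in(a,b)$ and all $\lambda\ge 0$.
   Context: Let $-\infty\le a<b\le\infty$ and let $p,r:(a,b)\to(0,\infty)$ be functions such that $p,p',r,r'$ are locally absolutely continuous on $(a,b)$. Write $\ell u=-\frac{1}{r}(p u')'$ and $u^{[1]}=p u'$. It is assumed that $\int_a^c\int_y^c \frac{dx}{p(x)}\,r(y)\,dy<\infty$ for some $c\in(a,b)$. For $\lambda\in\mathbb C$, $w_\lambda$ denotes the unique solution of $\ell w=\lambda w$ on $(a,b)$ with $\lim_{x\downarrow a}w(x)=1$ and $\lim_{x\downarrow a}w^{[1]}(x)=0$. *)

theory Defs
  imports "HOL-Analysis.Analysis"
begin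

definition ointerval :: "ereal \<Rightarrow> ereal \<Rightarrow> real set" where
  "ointerval a b = {x. a < ereal x \<and> ereal x < b}"

definition absolutely_continuous_on :: "real set \<Rightarrow> (real \<Rightarrow> 'b::real_normed_vector) \<Rightarrow> bool" where
  "absolutely_continuous_on S f \<longleftrightarrow>
     (\<forall>\<epsilon>>0. \<exists>\<delta>>0. \<forall>(n::nat) (c::nat \<Rightarrow> real) (d::nat \<Rightarrow> real).
        (\<forall>i<n. c i \<le> d i \<and> {c i..d i} \<subseteq> S) \<and>
        disjoint_family_on (\<lambda>i. {c i<..<d i}) {..<n} \<and>
        (\<Sum>i<n. d i - c i) < \<delta>
        \<longrightarrow> (\<Sum>i<n. norm (f (d i) - f (c i))) < \<epsilon>)"

definition locally_ac_on :: "real set \<Rightarrow> (real \<Rightarrow> 'b::real_normed_vector) \<Rightarrow> bool" where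
  "locally_ac_on S f \<longleftrightarrow> (\<forall>c d. {c..d} \<subseteq> S \<longrightarrow> absolutely_continuous_on {c..d} f)"

definition at_left_end :: "ereal \<Rightarrow> real filter" where
  "at_left_end a = (if a = -\<infinity> then at_bot else at_right (real_of_ereal a))"

text \<open>w solves  -(1/r)(p w')' = lam w  on (a,b) (in the Caratheodory sense), with
  quasi-derivative w1 = p w', where w and w1 are locally absolutely continuous.\<close>
definition sl_solution ::
  "ereal \<Rightarrow> ereal \<Rightarrow> (real \<Rightarrow> real) \<Rightarrow> (real \<Rightarrow> real) \<Rightarrow> complex \<Rightarrow>
   (real \<Rightarrow> complex) \<Rightarrow> (real \<Rightarrow> complex) \<Rightarrow> bool" where
  "sl_solution a b p r lam w w1 \<longleftrightarrow>
     locally_ac_on (ointerval a b) w \<and> locally_ac_on (ointerval a b) w1 \<and>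
     (AE x in lebesgue. x \<in> ointerval a b \<longrightarrow>
        (w has_vector_derivative (w1 x / complex_of_real (p x))) (at x)) \<and>
     (AE x in lebesgue. x \<in> ointerval a b \<longrightarrow>
        (w1 has_vector_derivative (- (lam * complex_of_real (r x) * w x))) (at x))"

end

theory Submission
  imports Defs
begin

text \<open>
  Let \<open>\<lambda> > 0\<close> and suppose \<open>|w x\<^sub>0| > 1\<close>. Since \<open>p r\<close> is nondecreasing, the energy
  \<open>|w|\<^sup>2 + |w1|\<^sup>2 / (\<lambda> p r)\<close> does not increase; near \<open>a\<close>, where \<open>|w| \<rightarrow> 1\<close>, it therefore forces
  \<open>u\<^sup>2 \<ge> 2\<eta>\<lambda> p r\<close> for \<open>u = |w1|\<close> and some \<open>\<eta> > 0\<close>. There \<open>|u'| \<le> \<lambda> r |w| \<le> 2\<lambda> r\<close>, so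
  \<open>(\<eta>/u)' \<le> 1/p\<close> gives \<open>\<eta>/u(y) \<le> \<integral>\<^sub>y\<^sup>c 1/p\<close>, and \<open>(ln u)' \<ge> -2\<lambda> r/u\<close> bounds \<open>ln u\<close> from below, up to a
  constant, by \<open>-(2\<lambda>/\<eta>) \<integral>\<^sub>a\<^sup>c r(y) \<integral>\<^sub>y\<^sup>c 1/p dx dy\<close>, which is finite. This contradicts \<open>u \<rightarrow> 0\<close> at \<open>a\<close>.
  For \<open>\<lambda> = 0\<close> the quasi-derivative and then \<open>w\<close> itself are constant.

  Solutions are only absolutely continuous with derivatives almost everywhere, so every
  monotonicity step rests on: an absolutely continuous function whose derivative is \<open>\<le> 0\<close> almost
  everywhere does not increase. This is proved with a fine tagged division: tags off the null set
  contribute at most \<open>\<epsilon>\<close> times the length, and the intervals tagged in a small open cover of the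
  null set contribute at most \<open>\<epsilon>\<close> by absolute continuity.
\<close>

section \<open>Absolute continuity\<close>

lemma absolutely_continuous_onE:
  assumes "absolutely_continuous_on S f" "e > 0"
  obtains \<delta> where "\<delta> > 0" "\<And>(n::nat) (c::nat \<Rightarrow> real) (d::nat \<Rightarrow> real).
        \<forall>i<n. c i \<le> d i \<and> {c i..d i} \<subseteq> S \<Longrightarrow>
        disjoint_family_on (\<lambda>i. {c i<..<d i}) {..<n} \<Longrightarrow>
        (\<Sum>i<n. d i - c i) < \<delta>
        \<Longrightarrow> (\<Sum>i<n. norm (f (d i) - f (c i))) < e"
proof -
  from assms obtain \<delta> where d: "\<delta> > 0" and H: "\<forall>(n::nat) (c::nat \<Rightarrow> real) (d::nat \<Rightarrow> real).
        (\<forall>i<n. c i \<le> d i \<and> {c i..d i} \<subseteq> S) \<and>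
        disjoint_family_on (\<lambda>i. {c i<..<d i}) {..<n} \<and>
        (\<Sum>i<n. d i - c i) < \<delta>
        \<longrightarrow> (\<Sum>i<n. norm (f (d i) - f (c i))) < e"
    unfolding absolutely_continuous_on_def by blast
  show ?thesis
    by (rule that[OF d]) (use H in blast)
qed

lemma absolutely_continuous_on_dominated:
  fixes f :: "real \<Rightarrow> 'a::real_normed_vector" and g :: "real \<Rightarrow> 'b::real_normed_vector"
    and h :: "real \<Rightarrow> 'c::real_normed_vector"
  assumes f: "absolutely_continuous_on S f" and g: "absolutely_continuous_on S g"
    and dom: "\<And>x y. x \<in> S \<Longrightarrow> y \<in> S \<Longrightarrow> x \<le> y \<Longrightarrow>
      norm (h y - h x) \<le> K * (norm (f y - f x) + norm (g y - g x))"
  shows "absolutely_continuous_on S h"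
  unfolding absolutely_continuous_on_def
proof (intro allI impI)
  fix e :: real assume "e > 0"
  define K' where "K' = \<bar>K\<bar> + 1"
  have K': "K' > 0" by (simp add: K'_def)
  with \<open>e > 0\<close> have e': "e / (2 * K') > 0" by simp
  obtain \<delta>1 where "\<delta>1 > 0" and \<delta>1: "\<And>(n::nat) (c::nat \<Rightarrow> real) d. \<forall>i<n. c i \<le> d i \<and> {c i..d i} \<subseteq> S \<Longrightarrow>
      disjoint_family_on (\<lambda>i. {c i<..<d i}) {..<n} \<Longrightarrow> (\<Sum>i<n. d i - c i) < \<delta>1 \<Longrightarrow>
      (\<Sum>i<n. norm (f (d i) - f (c i))) < e / (2 * K')"
    using absolutely_continuous_onE[OF f e'] by blast
  obtain \<delta>2 where "\<delta>2 > 0" and \<delta>2: "\<And>(n::nat) (c::nat \<Rightarrow> real) d. \<forall>i<n. c i \<le> d i \<and> {c i..d i} \<subseteq> S \<Longrightarrow>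
      disjoint_family_on (\<lambda>i. {c i<..<d i}) {..<n} \<Longrightarrow> (\<Sum>i<n. d i - c i) < \<delta>2 \<Longrightarrow>
      (\<Sum>i<n. norm (g (d i) - g (c i))) < e / (2 * K')"
    using absolutely_continuous_onE[OF g e'] by blast
  show "\<exists>\<delta>>0. \<forall>(n::nat) (c::nat \<Rightarrow> real) d. (\<forall>i<n. c i \<le> d i \<and> {c i..d i} \<subseteq> S) \<and>
      disjoint_family_on (\<lambda>i. {c i<..<d i}) {..<n} \<and> (\<Sum>i<n. d i - c i) < \<delta> \<longrightarrow>
      (\<Sum>i<n. norm (h (d i) - h (c i))) < e"
  proof (intro exI[of _ "min \<delta>1 \<delta>2"] conjI allI impI)
    show "min \<delta>1 \<delta>2 > 0" using \<open>\<delta>1 > 0\<close> \<open>\<delta>2 > 0\<close> by simp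
    fix n :: nat and c d :: "nat \<Rightarrow> real"
    assume A: "(\<forall>i<n. c i \<le> d i \<and> {c i..d i} \<subseteq> S) \<and>
      disjoint_family_on (\<lambda>i. {c i<..<d i}) {..<n} \<and> (\<Sum>i<n. d i - c i) < min \<delta>1 \<delta>2"
    have "(\<Sum>i<n. norm (h (d i) - h (c i)))
        \<le> (\<Sum>i<n. K' * (norm (f (d i) - f (c i)) + norm (g (d i) - g (c i))))"
    proof (rule sum_mono)
      fix i assume "i \<in> {..<n}"
      with A have "c i \<le> d i" "{c i..d i} \<subseteq> S" by auto
      then have "c i \<in> S" "d i \<in> S" "c i \<le> d i" by auto
      then have "norm (h (d i) - h (c i)) \<le> K * (norm (f (d i) - f (c i)) + norm (g (d i) - g (c i)))"
        by (rule dom)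
      also have "\<dots> \<le> K' * (norm (f (d i) - f (c i)) + norm (g (d i) - g (c i)))"
        unfolding K'_def by (intro mult_right_mono) auto
      finally show "norm (h (d i) - h (c i)) \<le> \<dots>" .
    qed
    also have "\<dots> = K' * (\<Sum>i<n. norm (f (d i) - f (c i))) + K' * (\<Sum>i<n. norm (g (d i) - g (c i)))"
      by (simp add: sum.distrib sum_distrib_left distrib_left)
    also have "\<dots> < K' * (e / (2 * K')) + K' * (e / (2 * K'))"
    proof -
      have "(\<Sum>i<n. norm (f (d i) - f (c i))) < e / (2 * K')"
        by (rule \<delta>1) (use A in auto)
      moreover have "(\<Sum>i<n. norm (g (d i) - g (c i))) < e / (2 * K')"
        by (rule \<delta>2) (use A in auto)
      ultimately show ?thesis using K' by (intro add_strict_mono mult_strict_left_mono)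
    qed
    also have "\<dots> = e" using K' by simp
    finally show "(\<Sum>i<n. norm (h (d i) - h (c i))) < e" .
  qed
qed

lemma absolutely_continuous_on_id: "absolutely_continuous_on S (\<lambda>x. x)"
  unfolding absolutely_continuous_on_def
proof (intro allI impI)
  fix e :: real assume "e > 0"
  then show "\<exists>\<delta>>0. \<forall>(n::nat) (c::nat \<Rightarrow> real) d. (\<forall>i<n. c i \<le> d i \<and> {c i..d i} \<subseteq> S) \<and>
      disjoint_family_on (\<lambda>i. {c i<..<d i}) {..<n} \<and> (\<Sum>i<n. d i - c i) < \<delta> \<longrightarrow>
      (\<Sum>i<n. norm (d i - c i)) < e"
  proof (intro exI[of _ e] conjI allI impI)
    fix n :: nat and c d :: "nat \<Rightarrow> real" assume A: "(\<forall>i<n. c i \<le> d i \<and> {c i..d i} \<subseteq> S) \<and>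
      disjoint_family_on (\<lambda>i. {c i<..<d i}) {..<n} \<and> (\<Sum>i<n. d i - c i) < e"
    then have "(\<Sum>i<n. norm (d i - c i)) = (\<Sum>i<n. d i - c i)"
      by (intro sum.cong) auto
    with A show "(\<Sum>i<n. norm (d i - c i)) < e" by simp
  qed
qed

lemma absolutely_continuous_on_compose_lipschitz:
  fixes f :: "real \<Rightarrow> 'a::real_normed_vector" and g :: "'a \<Rightarrow> 'b::real_normed_vector"
  assumes f: "absolutely_continuous_on S f" and T: "\<And>x. x \<in> S \<Longrightarrow> f x \<in> T"
    and L: "\<And>u v. u \<in> T \<Longrightarrow> v \<in> T \<Longrightarrow> norm (g u - g v) \<le> L * norm (u - v)"
  shows "absolutely_continuous_on S (\<lambda>x. g (f x))"
proof (rule absolutely_continuous_on_dominated[OF f f])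
  fix x y assume "x \<in> S" "y \<in> S"
  then have "norm (g (f y) - g (f x)) \<le> L * norm (f y - f x)" by (intro L T)
  also have "\<dots> \<le> \<bar>L\<bar> * (norm (f y - f x) + norm (f y - f x))"
    by (intro mult_mono) auto
  finally show "norm (g (f y) - g (f x)) \<le> \<bar>L\<bar> * (norm (f y - f x) + norm (f y - f x))" .
qed

lemma absolutely_continuous_on_lipschitz:
  fixes f :: "real \<Rightarrow> 'a::real_normed_vector"
  assumes L: "\<And>x y. x \<in> S \<Longrightarrow> y \<in> S \<Longrightarrow> x \<le> y \<Longrightarrow> norm (f y - f x) \<le> L * (y - x)"
  shows "absolutely_continuous_on S f"
proof (rule absolutely_continuous_on_dominated[OF absolutely_continuous_on_id absolutely_continuous_on_id])
  fix x y assume "x \<in> S" "y \<in> S" "x \<le> y"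
  then have "norm (f y - f x) \<le> L * (y - x)" by (rule L)
  also have "\<dots> \<le> \<bar>L\<bar> * (norm (y - x) + norm (y - x))"
    using \<open>x \<le> y\<close> by (intro mult_mono) auto
  finally show "norm (f y - f x) \<le> \<bar>L\<bar> * (norm (y - x) + norm (y - x))" .
qed

lemma absolutely_continuous_on_add:
  fixes f g :: "real \<Rightarrow> 'a::real_normed_vector"
  assumes "absolutely_continuous_on S f" "absolutely_continuous_on S g"
  shows "absolutely_continuous_on S (\<lambda>x. f x + g x)"
  by (rule absolutely_continuous_on_dominated[OF assms, of _ 1])
    (simp add: add_diff_add norm_triangle_ineq)

lemma absolutely_continuous_on_cmult:
  fixes f :: "real \<Rightarrow> real"
  assumes "absolutely_continuous_on S f"
  shows "absolutely_continuous_on S (\<lambda>x. k * f x)"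
  by (rule absolutely_continuous_on_compose_lipschitz[OF assms, of UNIV _ "\<bar>k\<bar>"])
    (auto simp: abs_mult[symmetric] algebra_simps)

lemma absolutely_continuous_on_Re:
  "absolutely_continuous_on S f \<Longrightarrow> absolutely_continuous_on S (\<lambda>x. Re (f x))"
  by (rule absolutely_continuous_on_compose_lipschitz[of _ _ UNIV _ 1])
    (auto simp: abs_Re_le_cmod simp flip: minus_complex.sel)

lemma absolutely_continuous_on_Im:
  "absolutely_continuous_on S f \<Longrightarrow> absolutely_continuous_on S (\<lambda>x. Im (f x))"
  by (rule absolutely_continuous_on_compose_lipschitz[of _ _ UNIV _ 1])
    (auto simp: abs_Im_le_cmod simp flip: minus_complex.sel)

lemma absolutely_continuous_on_norm:
  fixes f :: "real \<Rightarrow> 'a::real_normed_vector"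
  shows "absolutely_continuous_on S f \<Longrightarrow> absolutely_continuous_on S (\<lambda>x. norm (f x))"
  by (rule absolutely_continuous_on_compose_lipschitz[of _ _ UNIV _ 1])
    (auto simp: norm_triangle_ineq3)

lemma absolutely_continuous_on_imp_continuous_on:
  fixes f :: "real \<Rightarrow> 'b::real_normed_vector"
  assumes ac: "absolutely_continuous_on {a..b} f"
  shows "continuous_on {a..b} f"
  unfolding continuous_on_iff
proof (intro ballI allI impI)
  fix x and e :: real assume x: "x \<in> {a..b}" and e: "e > 0"
  obtain \<delta> where d: "\<delta> > 0" and H: "\<And>(n::nat) (c::nat \<Rightarrow> real) (d::nat \<Rightarrow> real).
        \<forall>i<n. c i \<le> d i \<and> {c i..d i} \<subseteq> {a..b} \<Longrightarrow>
        disjoint_family_on (\<lambda>i. {c i<..<d i}) {..<n} \<Longrightarrow>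
        (\<Sum>i<n. d i - c i) < \<delta>
        \<Longrightarrow> (\<Sum>i<n. norm (f (d i) - f (c i))) < e"
    using absolutely_continuous_onE[OF ac e] by blast
  show "\<exists>d>0. \<forall>x'\<in>{a..b}. dist x' x < d \<longrightarrow> dist (f x') (f x) < e"
  proof (intro exI[of _ \<delta>] conjI ballI impI d)
    fix y assume y: "y \<in> {a..b}" "dist y x < \<delta>"
    define cc where "cc = (\<lambda>i::nat. min x y)"
    define dd where "dd = (\<lambda>i::nat. max x y)"
    have "(\<Sum>i<1. norm (f (dd i) - f (cc i))) < e"
      by (rule H) (use x y in \<open>auto simp: cc_def dd_def dist_real_def disjoint_family_on_def\<close>)
    then show "dist (f y) (f x) < e"
      by (cases "x \<le> y") (auto simp: cc_def dd_def dist_norm norm_minus_commute)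
  qed
qed

lemma absolutely_continuous_on_mult:
  fixes f g :: "real \<Rightarrow> real"
  assumes f: "absolutely_continuous_on {a..b} f" and g: "absolutely_continuous_on {a..b} g"
  shows "absolutely_continuous_on {a..b} (\<lambda>x. f x * g x)"
proof -
  have "bounded (f ` {a..b})" "bounded (g ` {a..b})"
    by (intro compact_imp_bounded compact_continuous_image compact_Icc
        absolutely_continuous_on_imp_continuous_on f g)+
  then obtain Bf Bg where "\<And>x. x \<in> {a..b} \<Longrightarrow> \<bar>f x\<bar> \<le> Bf" "\<And>x. x \<in> {a..b} \<Longrightarrow> \<bar>g x\<bar> \<le> Bg"
    unfolding bounded_iff by (metis atLeastAtMost_iff image_eqI real_norm_def)
  then have B: "\<And>x. x \<in> {a..b} \<Longrightarrow> \<bar>f x\<bar> \<le> max Bf Bg \<and> \<bar>g x\<bar> \<le> max Bf Bg"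
    by (meson max.coboundedI1 max.coboundedI2)
  show ?thesis
  proof (rule absolutely_continuous_on_dominated[OF f g, of _ "max Bf Bg"])
    fix x y assume x: "x \<in> {a..b}" and y: "y \<in> {a..b}"
    have "\<bar>f y * (g y - g x)\<bar> + \<bar>g x * (f y - f x)\<bar>
        \<le> max Bf Bg * \<bar>g y - g x\<bar> + max Bf Bg * \<bar>f y - f x\<bar>"
      using B[OF x] B[OF y]
      unfolding abs_mult by (intro add_mono mult_right_mono) auto
    moreover have "f y * g y - f x * g x = f y * (g y - g x) + g x * (f y - f x)"
      by (simp add: algebra_simps)
    ultimately show "norm (f y * g y - f x * g x) \<le> max Bf Bg * (norm (f y - f x) + norm (g y - g x))"
      by (simp add: distrib_left) (smt (verit) abs_triangle_ineq)
  qed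
qed

lemma continuous_on_pos_min:
  fixes q :: "real \<Rightarrow> real"
  assumes "continuous_on {c..d} q" "\<And>t. t \<in> {c..d} \<Longrightarrow> q t > 0"
  obtains m where "m > 0" "\<And>t. t \<in> {c..d} \<Longrightarrow> m \<le> q t"
proof (cases "c \<le> d")
  case True
  then obtain t0 where "t0 \<in> {c..d}" "\<And>t. t \<in> {c..d} \<Longrightarrow> q t0 \<le> q t"
    using continuous_attains_inf[OF compact_Icc _ assms(1)] by auto
  with assms(2) show ?thesis by (intro that[of "q t0"]) auto
qed (use that[of 1] in auto)

lemma absolutely_continuous_on_inverse:
  fixes q :: "real \<Rightarrow> real"
  assumes q: "absolutely_continuous_on {c..d} q" and pos: "\<And>t. t \<in> {c..d} \<Longrightarrow> q t > 0"
  shows "absolutely_continuous_on {c..d} (\<lambda>t. 1 / q t)"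
proof -
  obtain m where m: "m > 0" "\<And>t. t \<in> {c..d} \<Longrightarrow> m \<le> q t"
    using continuous_on_pos_min[OF absolutely_continuous_on_imp_continuous_on[OF q] pos] by blast
  show ?thesis
  proof (rule absolutely_continuous_on_compose_lipschitz[OF q, of "{m..}" _ "1/m^2"])
    show "\<And>x. x \<in> {c..d} \<Longrightarrow> q x \<in> {m..}" using m by auto
    fix u v :: real assume u: "u \<in> {m..}" and v: "v \<in> {m..}"
    then have up: "u > 0" "v > 0" using m by auto
    have "norm (1/u - 1/v) = \<bar>v - u\<bar> / (u * v)" using up by (simp add: field_simps abs_div)
    also have "\<dots> \<le> \<bar>v - u\<bar> / (m * m)"
      using u v m up by (intro divide_left_mono mult_mono) auto
    also have "\<dots> = 1/m^2 * norm (u - v)" by (simp add: power2_eq_square abs_minus_commute)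
    finally show "norm (1/u - 1/v) \<le> 1/m^2 * norm (u - v)" .
  qed
qed

lemma ln_lipschitz:
  fixes u v m :: real
  assumes "m > 0" "m \<le> u" "m \<le> v"
  shows "\<bar>ln u - ln v\<bar> \<le> 1/m * \<bar>u - v\<bar>"
proof -
  have "ln x - ln y \<le> 1/m * (x - y)" if "m \<le> y" "y \<le> x" for x y
  proof -
    have pos: "x > 0" "y > 0" using that assms by auto
    have "ln x - ln y = ln (x / y)" using pos by (simp add: ln_div)
    also have "\<dots> \<le> x / y - 1" using pos by (intro ln_le_minus_one) simp
    also have "\<dots> = (x - y) / y" using pos by (simp add: field_simps)
    also have "\<dots> \<le> (x - y) / m" using that assms by (intro divide_left_mono) auto
    finally show ?thesis by simp
  qed
  from this[of v u] this[of u v] assms show ?thesis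
    by (cases "v \<le> u") (auto simp: abs_if)
qed

lemma absolutely_continuous_on_ln:
  fixes q :: "real \<Rightarrow> real"
  assumes q: "absolutely_continuous_on {c..d} q" and pos: "\<And>t. t \<in> {c..d} \<Longrightarrow> q t > 0"
  shows "absolutely_continuous_on {c..d} (\<lambda>t. ln (q t))"
proof -
  obtain m where m: "m > 0" "\<And>t. t \<in> {c..d} \<Longrightarrow> m \<le> q t"
    using continuous_on_pos_min[OF absolutely_continuous_on_imp_continuous_on[OF q] pos] by blast
  show ?thesis
    by (rule absolutely_continuous_on_compose_lipschitz[OF q, of "{m..}" _ "1/m"])
      (use m ln_lipschitz[OF m(1)] in auto)
qed

lemma absolutely_continuous_on_integral:
  fixes g :: "real \<Rightarrow> real"
  assumes g: "continuous_on {c..d} g"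
  shows "absolutely_continuous_on {c..d} (\<lambda>s. integral {c..s} g)"
proof -
  obtain B where B: "\<And>x. x \<in> {c..d} \<Longrightarrow> norm (g x) \<le> B"
    using compact_imp_bounded[OF compact_continuous_image[OF g compact_Icc]]
    unfolding bounded_iff by blast
  show ?thesis
  proof (rule absolutely_continuous_on_lipschitz[of _ _ B])
    fix x y assume x: "x \<in> {c..d}" and y: "y \<in> {c..d}" and "x \<le> y"
    have "integral {c..x} g + integral {x..y} g = integral {c..y} g"
      using x y \<open>x \<le> y\<close>
      by (intro Henstock_Kurzweil_Integration.integral_combine integrable_continuous_real
          continuous_on_subset[OF g]) auto
    moreover have "norm (integral {x..y} g) \<le> B * (y - x)"
      using x y \<open>x \<le> y\<close> B by (intro integral_bound continuous_on_subset[OF g]) auto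
    ultimately show "norm (integral {c..y} g - integral {c..x} g) \<le> B * (y - x)"
      by (simp add: algebra_simps)
  qed
qed

lemma tagged_partial_division_interval_real:
  fixes c d :: real
  assumes "q tagged_partial_division_of {c..d}" "(x, K) \<in> q"
  shows "Inf K \<in> K" "Sup K \<in> K" "K \<subseteq> {c..d}" "interior K = {Inf K<..<Sup K}"
    "measure lborel K = Sup K - Inf K" "Inf K \<le> Sup K" "K \<subseteq> {Inf K..Sup K}"
proof -
  obtain u v where "K = {u..v}"
    using tagged_partial_division_ofD(4)[OF assms] by (metis cbox_interval)
  moreover have "x \<in> K" "K \<subseteq> {c..d}"
    using tagged_partial_division_ofD(2,3)[OF assms] by auto
  ultimately show "Inf K \<in> K" "Sup K \<in> K" "K \<subseteq> {c..d}" "interior K = {Inf K<..<Sup K}"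
    "measure lborel K = Sup K - Inf K" "Inf K \<le> Sup K" "K \<subseteq> {Inf K..Sup K}"
    by auto
qed

lemma absolutely_continuous_on_tagged_partial_division:
  assumes "absolutely_continuous_on {c..d} F" "e > 0"
  obtains \<delta> where "\<delta> > 0" "\<And>q. q tagged_partial_division_of {c..d} \<Longrightarrow>
      (\<Sum>(x,K)\<in>q. measure lborel K) < \<delta> \<Longrightarrow> (\<Sum>(x,K)\<in>q. norm (F (Sup K) - F (Inf K))) < e"
proof -
  obtain \<delta> where "\<delta> > 0" and \<delta>: "\<And>(n::nat) (l::nat \<Rightarrow> real) (u::nat \<Rightarrow> real).
        \<forall>i<n. l i \<le> u i \<and> {l i..u i} \<subseteq> {c..d} \<Longrightarrow>
        disjoint_family_on (\<lambda>i. {l i<..<u i}) {..<n} \<Longrightarrow> (\<Sum>i<n. u i - l i) < \<delta> \<Longrightarrow>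
        (\<Sum>i<n. norm (F (u i) - F (l i))) < e"
    using absolutely_continuous_onE[OF assms] by blast
  show ?thesis
  proof (rule that[OF \<open>\<delta> > 0\<close>])
    fix q assume q: "q tagged_partial_division_of {c..d}" and small: "(\<Sum>(x,K)\<in>q. measure lborel K) < \<delta>"
    note K = tagged_partial_division_interval_real[OF q]
    obtain h where h: "bij_betw h {..<card q} q"
      using ex_bij_betw_nat_finite[OF tagged_partial_division_ofD(1)[OF q]] by (auto simp: atLeast0LessThan)
    have hq: "h i \<in> q" if "i < card q" for i
      using h that by (auto simp: bij_betw_def)
    define l where "l i = Inf (snd (h i))" for i
    define u where "u i = Sup (snd (h i))" for i
    have content: "measure lborel (snd (h i)) = u i - l i" if "i < card q" for i
      using K(5)[of "fst (h i)" "snd (h i)"] hq[OF that] unfolding l_def u_def by simp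
    have "(\<Sum>i<card q. norm (F (u i) - F (l i))) < e"
    proof (rule \<delta>)
      show "\<forall>i<card q. l i \<le> u i \<and> {l i..u i} \<subseteq> {c..d}"
      proof (intro allI impI)
        fix i assume "i < card q"
        then have "l i \<in> {c..d}" "u i \<in> {c..d}" "l i \<le> u i"
          using K(1,2,3,6)[of "fst (h i)" "snd (h i)"] hq unfolding l_def u_def by auto
        then show "l i \<le> u i \<and> {l i..u i} \<subseteq> {c..d}"
          by auto
      qed
      show "disjoint_family_on (\<lambda>i. {l i<..<u i}) {..<card q}"
        unfolding disjoint_family_on_def
      proof (intro ballI impI)
        fix i j assume "i \<in> {..<card q}" "j \<in> {..<card q}" "i \<noteq> j"
        then have "h i \<noteq> h j" "h i \<in> q" "h j \<in> q"
          using h by (auto simp: bij_betw_def inj_on_def)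
        then have "interior (snd (h i)) \<inter> interior (snd (h j)) = {}"
          using tagged_partial_division_ofD(5)[OF q] by (metis prod.collapse)
        then show "{l i<..<u i} \<inter> {l j<..<u j} = {}"
          using K(4)[of "fst (h i)" "snd (h i)"] K(4)[of "fst (h j)" "snd (h j)"] \<open>h i \<in> q\<close> \<open>h j \<in> q\<close>
          unfolding l_def u_def by simp
      qed
      show "(\<Sum>i<card q. u i - l i) < \<delta>"
        using small sum.reindex_bij_betw[OF h, of "\<lambda>(x,K). measure lborel K"] content
        by (simp add: case_prod_unfold)
    qed
    then show "(\<Sum>(x,K)\<in>q. norm (F (Sup K) - F (Inf K))) < e"
      using sum.reindex_bij_betw[OF h, of "\<lambda>(x,K). norm (F (Sup K) - F (Inf K))"]
      by (simp add: case_prod_unfold l_def u_def)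
  qed
qed

lemma sum_content_tagged_partial_division_le_measure:
  assumes q: "q tagged_partial_division_of S" and sub: "\<And>x K. (x, K) \<in> q \<Longrightarrow> K \<subseteq> U"
    and U: "U \<in> lmeasurable"
  shows "(\<Sum>(x,K)\<in>q. measure lborel K) \<le> measure lebesgue U"
proof -
  have div: "q tagged_division_of \<Union>(snd ` q)"
    by (rule tagged_partial_division_of_Union_self[OF q])
  have "(\<Sum>(x,K)\<in>q. measure lborel K) = sum (measure lborel) (snd ` q)"
    by (rule sum.over_tagged_division_lemma[OF div]) (simp add: content_eq_0_interior)
  also have "\<dots> = (\<Sum>K\<in>snd ` q. measure lebesgue K)"
    by (auto intro!: sum.cong dest!: division_ofD(4)[OF division_of_tagged_division[OF div]])
  also have "\<dots> = measure lebesgue (\<Union>(snd ` q))"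
    by (rule content_division[OF division_of_tagged_division[OF div]])
  also have "\<dots> \<le> measure lebesgue U"
    using sub lmeasurable_division[OF division_of_tagged_division[OF div]] U
    by (intro measure_mono_fmeasurable) (auto intro: fmeasurableD, blast)
  finally show ?thesis .
qed

lemma has_real_derivative_approx:
  assumes "(F has_real_derivative D) (at x)" "e > 0"
  obtains \<rho> where "\<rho> > 0" "\<And>y. \<bar>y - x\<bar> < \<rho> \<Longrightarrow> \<bar>F y - F x - D * (y - x)\<bar> \<le> e * \<bar>y - x\<bar>"
proof -
  have "\<exists>\<rho>>0. \<forall>y. \<bar>y - x\<bar> < \<rho> \<longrightarrow> \<bar>F y - F x - D * (y - x)\<bar> \<le> e * \<bar>y - x\<bar>"
    using assms(1) unfolding has_field_derivative_def has_derivative_at_alt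
    using assms(2) by (simp add: mult.commute)
  with that show ?thesis by blast
qed

lemma increment_le_of_nonpos_derivative_approx:
  fixes F :: "real \<Rightarrow> real"
  assumes "D \<le> 0" "u \<le> x" "x \<le> v"
    and approx: "\<And>y. y \<in> {u, v} \<Longrightarrow> \<bar>F y - F x - D * (y - x)\<bar> \<le> e * \<bar>y - x\<bar>"
  shows "F v - F u \<le> e * (v - u)"
proof -
  have "D * (v - x) \<le> 0" "D * (u - x) \<ge> 0"
    using assms(1-3) by (auto simp: mult_nonpos_nonneg mult_nonpos_nonpos)
  with approx[of u] approx[of v] assms(2,3) have "F v - F u \<le> e * (v - x) + e * (x - u)"
    by (auto simp: abs_le_iff)
  then show ?thesis by (simp add: algebra_simps)
qed

lemma radius_adapted_to_deriv_nonpos: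
  fixes F :: "real \<Rightarrow> real"
  assumes U: "open U" "M \<subseteq> U" and "e > 0"
    and der: "\<And>x. x \<in> {c..d} \<Longrightarrow> x \<notin> M \<Longrightarrow> \<exists>D. (F has_real_derivative D) (at x) \<and> D \<le> 0"
  obtains \<rho> where "\<And>x. \<rho> x > 0" "\<And>x. x \<in> M \<Longrightarrow> ball x (\<rho> x) \<subseteq> U"
    "\<And>x. x \<in> {c..d} - M \<Longrightarrow>
      \<exists>D\<le>0. \<forall>y. \<bar>y - x\<bar> < \<rho> x \<longrightarrow> \<bar>F y - F x - D * (y - x)\<bar> \<le> e * \<bar>y - x\<bar>"
proof -
  have "\<forall>x. \<exists>\<rho>>0. (x \<in> M \<longrightarrow> ball x \<rho> \<subseteq> U) \<and> (x \<in> {c..d} - M \<longrightarrow>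
      (\<exists>D\<le>0. \<forall>y. \<bar>y - x\<bar> < \<rho> \<longrightarrow> \<bar>F y - F x - D * (y - x)\<bar> \<le> e * \<bar>y - x\<bar>))"
  proof
    fix x
    show "\<exists>\<rho>>0. (x \<in> M \<longrightarrow> ball x \<rho> \<subseteq> U) \<and> (x \<in> {c..d} - M \<longrightarrow>
      (\<exists>D\<le>0. \<forall>y. \<bar>y - x\<bar> < \<rho> \<longrightarrow> \<bar>F y - F x - D * (y - x)\<bar> \<le> e * \<bar>y - x\<bar>))"
    proof (cases "x \<in> M")
      case True
      then obtain \<rho> where "\<rho> > 0" "ball x \<rho> \<subseteq> U"
        using U open_contains_ball by blast
      with True show ?thesis by blast
    next
      case False
      show ?thesis
      proof (cases "x \<in> {c..d}")
        case True
        with False obtain D where D: "(F has_real_derivative D) (at x)" "D \<le> 0"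
          using der by blast
        obtain \<rho> where "\<rho> > 0" "\<And>y. \<bar>y - x\<bar> < \<rho> \<Longrightarrow> \<bar>F y - F x - D * (y - x)\<bar> \<le> e * \<bar>y - x\<bar>"
          using has_real_derivative_approx[OF D(1) \<open>e > 0\<close>] by blast
        with D(2) False show ?thesis by blast
      next
        case False
        with \<open>x \<notin> M\<close> show ?thesis by (intro exI[of _ 1]) auto
      qed
    qed
  qed
  from choice[OF this] obtain \<rho> where \<rho>: "\<forall>x. \<rho> x > 0 \<and> (x \<in> M \<longrightarrow> ball x (\<rho> x) \<subseteq> U) \<and>
      (x \<in> {c..d} - M \<longrightarrow> (\<exists>D\<le>0. \<forall>y. \<bar>y - x\<bar> < \<rho> x \<longrightarrow> \<bar>F y - F x - D * (y - x)\<bar> \<le> e * \<bar>y - x\<bar>))"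
    by blast
  with that show ?thesis by blast
qed

lemma tagged_division_adapted_to_deriv_nonpos:
  fixes F :: "real \<Rightarrow> real"
  assumes U: "open U" "M \<subseteq> U" and "e > 0"
    and der: "\<And>x. x \<in> {c..d} \<Longrightarrow> x \<notin> M \<Longrightarrow> \<exists>D. (F has_real_derivative D) (at x) \<and> D \<le> 0"
  obtains p where "p tagged_division_of {c..d}" "\<And>x K. (x, K) \<in> p \<Longrightarrow> x \<in> M \<Longrightarrow> K \<subseteq> U"
    "\<And>x K. (x, K) \<in> p \<Longrightarrow> x \<notin> M \<Longrightarrow> F (Sup K) - F (Inf K) \<le> e * measure lborel K"
proof -
  obtain \<rho> where \<rho>: "\<And>x. \<rho> x > 0" "\<And>x. x \<in> M \<Longrightarrow> ball x (\<rho> x) \<subseteq> U"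
    "\<And>x. x \<in> {c..d} - M \<Longrightarrow>
      \<exists>D\<le>0. \<forall>y. \<bar>y - x\<bar> < \<rho> x \<longrightarrow> \<bar>F y - F x - D * (y - x)\<bar> \<le> e * \<bar>y - x\<bar>"
    using radius_adapted_to_deriv_nonpos[OF U \<open>e > 0\<close> der] by metis
  have "gauge (\<lambda>x. ball x (\<rho> x))" using \<rho>(1) by (intro gauge_ball_dependent) blast
  then obtain p where p: "p tagged_division_of {c..d}" "(\<lambda>x. ball x (\<rho> x)) fine p"
    using fine_division_exists_real by blast
  have pp: "p tagged_partial_division_of {c..d}"
    using p(1) by (rule tagged_division_of_def[THEN iffD1, THEN conjunct1])
  note K = tagged_partial_division_interval_real[OF pp]
  have fine: "K \<subseteq> ball x (\<rho> x)" "x \<in> K" if "(x, K) \<in> p" for x K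
    using p that unfolding fine_def by auto
  show ?thesis
  proof (rule that[OF p(1)])
    show "K \<subseteq> U" if "(x, K) \<in> p" "x \<in> M" for x K
      using fine(1)[OF that(1)] \<rho>(2) that(2) by blast
    fix x K assume xK: "(x, K) \<in> p" "x \<notin> M"
    then have "x \<in> {c..d} - M" using K(3)[OF xK(1)] fine(2)[OF xK(1)] by blast
    then obtain D where "D \<le> 0"
      and D: "\<forall>y. \<bar>y - x\<bar> < \<rho> x \<longrightarrow> \<bar>F y - F x - D * (y - x)\<bar> \<le> e * \<bar>y - x\<bar>"
      using \<rho>(3) by blast
    have I: "Inf K \<in> K" "Sup K \<in> K" and measure: "measure lborel K = Sup K - Inf K"
      using K(1,2,5)[OF xK(1)] by auto
    have "Inf K \<le> x" "x \<le> Sup K"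
      using K(7)[OF xK(1)] fine(2)[OF xK(1)] by auto
    moreover have "\<bar>y - x\<bar> < \<rho> x" if "y \<in> {Inf K, Sup K}" for y
      using that I fine(1)[OF xK(1)] by (auto simp: dist_real_def abs_minus_commute)
    ultimately have "F (Sup K) - F (Inf K) \<le> e * (Sup K - Inf K)"
      by (intro increment_le_of_nonpos_derivative_approx[OF \<open>D \<le> 0\<close>]) (auto intro: D[rule_format])
    then show "F (Sup K) - F (Inf K) \<le> e * measure lborel K"
      unfolding measure .
  qed
qed

lemma absolutely_continuous_on_increment_le_of_deriv_nonpos:
  fixes F :: "real \<Rightarrow> real"
  assumes "c \<le> d" and ac: "absolutely_continuous_on {c..d} F" and "negligible N"
    and der: "\<And>x. x \<in> {c<..<d} \<Longrightarrow> x \<notin> N \<Longrightarrow> \<exists>D. (F has_real_derivative D) (at x) \<and> D \<le> 0"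
    and "e > 0"
  shows "F d - F c \<le> e * (d - c) + e"
proof -
  obtain \<delta> where "\<delta> > 0" and \<delta>: "\<And>q. q tagged_partial_division_of {c..d} \<Longrightarrow>
      (\<Sum>(x,K)\<in>q. measure lborel K) < \<delta> \<Longrightarrow> (\<Sum>(x,K)\<in>q. norm (F (Sup K) - F (Inf K))) < e"
    using absolutely_continuous_on_tagged_partial_division[OF ac \<open>e > 0\<close>] by blast
  define M where "M = N \<union> {c, d}"
  have "negligible M"
    unfolding M_def by (rule negligible_Un[OF \<open>negligible N\<close> negligible_finite]) simp
  then obtain U where U: "open U" "M \<subseteq> U" "U - M \<in> lmeasurable" "emeasure lebesgue (U - M) < ennreal \<delta>"
    by (rule sets_lebesgue_outer_open[OF negligible_imp_sets \<open>\<delta> > 0\<close>])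
  have sd: "negligible (sym_diff (U - M) U)"
    by (rule negligible_subset[OF \<open>negligible M\<close>]) auto
  have "U \<in> lmeasurable" by (rule lmeasurable_negligible_symdiff[OF U(3) sd])
  have "measure lebesgue U < \<delta>"
    using U(3,4) measure_negligible_symdiff[OF U(3) sd]
    by (simp add: emeasure_eq_measure2 ennreal_less_iff)
  have "\<exists>D. (F has_real_derivative D) (at x) \<and> D \<le> 0" if "x \<in> {c..d}" "x \<notin> M" for x
    using der that by (auto simp: M_def)
  then obtain p where p: "p tagged_division_of {c..d}" and inU: "\<And>x K. (x, K) \<in> p \<Longrightarrow> x \<in> M \<Longrightarrow> K \<subseteq> U"
    and good: "\<And>x K. (x, K) \<in> p \<Longrightarrow> x \<notin> M \<Longrightarrow> F (Sup K) - F (Inf K) \<le> e * measure lborel K"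
    using tagged_division_adapted_to_deriv_nonpos[OF U(1,2) \<open>e > 0\<close>] by metis
  have pp: "p tagged_partial_division_of {c..d}"
    using p by (rule tagged_division_of_def[THEN iffD1, THEN conjunct1])
  define p1 where "p1 = {z \<in> p. fst z \<in> M}"
  define p2 where "p2 = {z \<in> p. fst z \<notin> M}"
  have "finite p" using p by blast
  have p12: "p = p1 \<union> p2" "p1 \<inter> p2 = {}" "finite p1" "finite p2"
    using \<open>finite p\<close> by (auto simp: p1_def p2_def)
  have "F d - F c = (\<Sum>(x,K)\<in>p. F (Sup K) - F (Inf K))"
    using additive_tagged_division_1[OF \<open>c \<le> d\<close> p, of F] by simp
  also have "\<dots> = (\<Sum>(x,K)\<in>p1. F (Sup K) - F (Inf K)) + (\<Sum>(x,K)\<in>p2. F (Sup K) - F (Inf K))"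
    unfolding p12(1) by (rule sum.union_disjoint[OF p12(3,4,2)])
  finally have split: "F d - F c = (\<Sum>(x,K)\<in>p1. F (Sup K) - F (Inf K)) + (\<Sum>(x,K)\<in>p2. F (Sup K) - F (Inf K))" .
  have bad: "(\<Sum>(x,K)\<in>p1. F (Sup K) - F (Inf K)) < e"
  proof -
    have p1: "p1 tagged_partial_division_of {c..d}"
      by (rule tagged_partial_division_subset[OF pp]) (simp add: p1_def)
    have "(\<Sum>(x,K)\<in>p1. measure lborel K) \<le> measure lebesgue U"
      using inU by (intro sum_content_tagged_partial_division_le_measure[OF p1 _ \<open>U \<in> lmeasurable\<close>])
        (auto simp: p1_def)
    with \<open>measure lebesgue U < \<delta>\<close> have "(\<Sum>(x,K)\<in>p1. norm (F (Sup K) - F (Inf K))) < e"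
      by (intro \<delta>[OF p1]) linarith
    moreover have "(\<Sum>(x,K)\<in>p1. F (Sup K) - F (Inf K)) \<le> (\<Sum>(x,K)\<in>p1. norm (F (Sup K) - F (Inf K)))"
      by (rule sum_mono) auto
    ultimately show ?thesis by linarith
  qed
  have "(\<Sum>(x,K)\<in>p2. F (Sup K) - F (Inf K)) \<le> (\<Sum>(x,K)\<in>p2. e * measure lborel K)"
    using good by (intro sum_mono) (auto simp: p2_def)
  also have "\<dots> \<le> (\<Sum>(x,K)\<in>p. e * measure lborel K)"
    using \<open>finite p\<close> \<open>e > 0\<close> by (intro sum_mono2) (auto simp: p2_def case_prod_unfold)
  also have "\<dots> = e * (d - c)"
    using additive_content_tagged_division[of p c d] p \<open>c \<le> d\<close>
    by (simp add: sum_distrib_left[symmetric] case_prod_unfold)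
  finally show ?thesis using split bad by linarith
qed

lemma absolutely_continuous_on_deriv_nonpos_imp_le:
  fixes F :: "real \<Rightarrow> real"
  assumes "c \<le> d" "absolutely_continuous_on {c..d} F" "negligible N"
    and "\<And>x. x \<in> {c<..<d} \<Longrightarrow> x \<notin> N \<Longrightarrow> \<exists>D. (F has_real_derivative D) (at x) \<and> D \<le> 0"
  shows "F d \<le> F c"
proof (rule ccontr)
  assume "\<not> F d \<le> F c"
  define e where "e = (F d - F c) / (2 * (d - c + 1))"
  have "e > 0" using \<open>\<not> F d \<le> F c\<close> \<open>c \<le> d\<close> by (simp add: e_def)
  have "e * (d - c) + e = e * (d - c + 1)" by (simp add: algebra_simps)
  also have "\<dots> = (F d - F c) / 2" unfolding e_def using \<open>c \<le> d\<close> by (simp add: field_simps)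
  finally have "e * (d - c) + e = (F d - F c) / 2" .
  moreover have "F d - F c \<le> e * (d - c) + e"
    using absolutely_continuous_on_increment_le_of_deriv_nonpos[OF assms \<open>e > 0\<close>] .
  ultimately show False using \<open>\<not> F d \<le> F c\<close> by argo
qed

lemma absolutely_continuous_on_deriv_nonneg_imp_le:
  fixes F :: "real \<Rightarrow> real"
  assumes "c \<le> d" "absolutely_continuous_on {c..d} F" "negligible N"
    and der: "\<And>x. x \<in> {c<..<d} \<Longrightarrow> x \<notin> N \<Longrightarrow> \<exists>D. (F has_real_derivative D) (at x) \<and> D \<ge> 0"
  shows "F c \<le> F d"
proof -
  have "- F d \<le> - F c"
  proof (rule absolutely_continuous_on_deriv_nonpos_imp_le[OF assms(1) _ assms(3)])
    show "absolutely_continuous_on {c..d} (\<lambda>x. - F x)"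
      using absolutely_continuous_on_cmult[OF assms(2), of "-1"] by simp
    fix x assume "x \<in> {c<..<d}" "x \<notin> N"
    with der obtain D where "(F has_real_derivative D) (at x)" "D \<ge> 0" by blast
    then show "\<exists>D. ((\<lambda>x. - F x) has_real_derivative D) (at x) \<and> D \<le> 0"
      by (intro exI[of _ "-D"]) (auto intro: DERIV_minus)
  qed
  then show ?thesis by simp
qed

lemma absolutely_continuous_on_deriv_zero_imp_eq:
  fixes f :: "real \<Rightarrow> complex"
  assumes "c \<le> d" and ac: "absolutely_continuous_on {c..d} f" and "negligible N"
    and der: "\<And>x. x \<in> {c<..<d} \<Longrightarrow> x \<notin> N \<Longrightarrow> (f has_vector_derivative 0) (at x)"
  shows "f d = f c"
proof (rule complex_eqI)
  have Re: "((\<lambda>x. Re (f x)) has_real_derivative 0) (at x)"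
    and Im: "((\<lambda>x. Im (f x)) has_real_derivative 0) (at x)"
    if "x \<in> {c<..<d}" "x \<notin> N" for x
    using has_field_derivative_Re[OF der[OF that]] has_field_derivative_Im[OF der[OF that]] by simp_all
  have "Re (f d) \<le> Re (f c)"
    by (rule absolutely_continuous_on_deriv_nonpos_imp_le[OF assms(1) absolutely_continuous_on_Re[OF ac] assms(3)])
      (use Re in blast)
  moreover have "Re (f c) \<le> Re (f d)"
    by (rule absolutely_continuous_on_deriv_nonneg_imp_le[OF assms(1) absolutely_continuous_on_Re[OF ac] assms(3)])
      (use Re in blast)
  ultimately show "Re (f d) = Re (f c)" by simp
  have "Im (f d) \<le> Im (f c)"
    by (rule absolutely_continuous_on_deriv_nonpos_imp_le[OF assms(1) absolutely_continuous_on_Im[OF ac] assms(3)])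
      (use Im in blast)
  moreover have "Im (f c) \<le> Im (f d)"
    by (rule absolutely_continuous_on_deriv_nonneg_imp_le[OF assms(1) absolutely_continuous_on_Im[OF ac] assms(3)])
      (use Im in blast)
  ultimately show "Im (f d) = Im (f c)" by simp
qed

lemma has_real_derivative_norm_le:
  fixes f :: "real \<Rightarrow> complex"
  assumes D: "(f has_vector_derivative D) (at s)" and "f s \<noteq> 0"
  obtains U where "((\<lambda>t. norm (f t)) has_real_derivative U) (at s)" "\<bar>U\<bar> \<le> norm D"
proof -
  have R: "((\<lambda>t. Re (f t)) has_real_derivative Re D) (at s)"
    and I: "((\<lambda>t. Im (f t)) has_real_derivative Im D) (at s)"
    using has_field_derivative_Re[OF D] has_field_derivative_Im[OF D] .
  have pos: "0 < (Re (f s))\<^sup>2 + (Im (f s))\<^sup>2"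
    using \<open>f s \<noteq> 0\<close> by (simp add: cmod_power2[symmetric])
  define U where "U = Re (cnj (f s) * D) / norm (f s)"
  have sq: "((\<lambda>t. (Re (f t))\<^sup>2 + (Im (f t))\<^sup>2) has_real_derivative
      2 * Re (f s) * Re D + 2 * Im (f s) * Im D) (at s)"
    by (rule DERIV_cong[OF DERIV_add[OF DERIV_power[OF R, of 2] DERIV_power[OF I, of 2]]])
      (simp add: algebra_simps)
  have "((\<lambda>t. sqrt ((Re (f t))\<^sup>2 + (Im (f t))\<^sup>2)) has_real_derivative U) (at s)"
  proof (rule DERIV_cong[OF DERIV_chain2[OF DERIV_real_sqrt[OF pos] sq]])
    show "inverse (sqrt ((Re (f s))\<^sup>2 + (Im (f s))\<^sup>2)) / 2 * (2 * Re (f s) * Re D + 2 * Im (f s) * Im D) = U"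
      by (simp add: U_def cmod_def divide_simps)
  qed
  moreover have "\<bar>U\<bar> \<le> norm D"
    using abs_Re_le_cmod[of "cnj (f s) * D"] \<open>f s \<noteq> 0\<close>
    by (simp add: U_def norm_mult abs_div divide_le_eq mult.commute)
  ultimately show ?thesis by (intro that) (simp_all add: cmod_def)
qed

lemma integral_has_real_derivative_interior:
  fixes g :: "real \<Rightarrow> real"
  assumes "continuous_on {c..d} g" "s \<in> {c<..<d}"
  shows "((\<lambda>s. integral {c..s} g) has_real_derivative g s) (at s)"
proof -
  have "((\<lambda>s. integral {c..s} g) has_real_derivative g s) (at s within {c..d})"
    using integral_has_real_derivative[OF assms(1)] assms(2) by auto
  moreover have "at s within {c..d} = at s"
    by (rule at_within_interior) (use assms(2) in simp)
  ultimately show ?thesis by simp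
qed

section \<open>Intervals with extended-real endpoints\<close>

lemma ointerval_Icc_subset:
  assumes "x \<in> ointerval a b" "y \<in> ointerval a b"
  shows "{x..y} \<subseteq> ointerval a b"
proof
  fix z assume "z \<in> {x..y}"
  then have "ereal x \<le> ereal z" "ereal z \<le> ereal y" by auto
  moreover have "a < ereal x" "ereal y < b" using assms by (simp_all add: ointerval_def)
  ultimately have "a < ereal z" "ereal z < b" by (meson less_le_trans le_less_trans)+
  then show "z \<in> ointerval a b" by (simp add: ointerval_def)
qed

lemma ointerval_downward_closed:
  assumes "y0 \<in> ointerval a b" "a < ereal y" "y \<le> y0"
  shows "y \<in> ointerval a b"
proof -
  have "ereal y \<le> ereal y0" "ereal y0 < b" using assms(1,3) by (simp_all add: ointerval_def)
  then have "ereal y < b" by (rule le_less_trans)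
  with assms(2) show ?thesis by (simp add: ointerval_def)
qed

lemma locally_ac_on_ointervalD:
  assumes "locally_ac_on (ointerval a b) f" "y \<in> ointerval a b" "x \<in> ointerval a b"
  shows "absolutely_continuous_on {y..x} f"
  using assms ointerval_Icc_subset[OF assms(2,3)] unfolding locally_ac_on_def by blast

lemma locally_ac_on_ointerval_continuous_on:
  "locally_ac_on (ointerval a b) f \<Longrightarrow> y \<in> ointerval a b \<Longrightarrow> x \<in> ointerval a b \<Longrightarrow>
    continuous_on {y..x} f"
  by (rule absolutely_continuous_on_imp_continuous_on[OF locally_ac_on_ointervalD])

lemma mono_on_ointerval_deriv_nonneg:
  fixes q :: "real \<Rightarrow> real"
  assumes mono: "mono_on (ointerval a b) q" and x: "x \<in> ointerval a b"
    and D: "(q has_real_derivative D) (at x)"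
  shows "D \<ge> 0"
proof (rule ccontr)
  assume "\<not> D \<ge> 0"
  then obtain d where "d > 0" and d: "\<And>h. h > 0 \<Longrightarrow> h < d \<Longrightarrow> q x > q (x + h)"
    using DERIV_neg_dec_right[OF D] by (meson not_le)
  have "ereal x < b" using x by (simp add: ointerval_def)
  then obtain t where "ereal x < ereal t" "ereal t < b" using ereal_dense2 by blast
  define h where "h = min (d / 2) (t - x)"
  have h: "h > 0" "h < d" using \<open>d > 0\<close> \<open>ereal x < ereal t\<close> by (auto simp: h_def)
  have "t \<in> ointerval a b"
    using x \<open>ereal x < ereal t\<close> \<open>ereal t < b\<close> by (auto simp: ointerval_def intro: less_trans)
  moreover have "h \<le> t - x" by (simp add: h_def)
  ultimately have "x + h \<in> ointerval a b"
    using ointerval_Icc_subset[OF x] h by force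
  then have "q x \<le> q (x + h)" using mono x h by (auto simp: mono_on_def)
  with d[OF h] show False by simp
qed

lemma at_left_end_neq_bot: "at_left_end a \<noteq> bot"
  by (simp add: at_left_end_def)

lemma eventually_at_left_end_initial_segment:
  assumes ev: "eventually P (at_left_end a)" and x: "x \<in> ointerval a b"
  obtains y0 where "y0 \<in> ointerval a b" "y0 < x" "\<And>y. a < ereal y \<Longrightarrow> y \<le> y0 \<Longrightarrow> P y"
proof (cases "a = -\<infinity>")
  case True
  then have "eventually P at_bot" using ev by (simp add: at_left_end_def)
  then obtain N where N: "\<forall>n\<le>N. P n" unfolding eventually_at_bot_linorder by blast
  define y0 where "y0 = min N (x - 1)"
  have "y0 \<in> ointerval a b"
  proof -
    have "y0 < x" by (simp add: y0_def)
    then have "ereal y0 < ereal x" by simp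
    also have "\<dots> < b" using x by (simp add: ointerval_def)
    finally show ?thesis using True by (simp add: ointerval_def)
  qed
  moreover have "y0 < x" by (simp add: y0_def)
  moreover have "\<And>y. a < ereal y \<Longrightarrow> y \<le> y0 \<Longrightarrow> P y" using N by (auto simp: y0_def)
  ultimately show ?thesis by (rule that)
next
  case False
  have "a < ereal x" using x by (simp add: ointerval_def)
  then have "a \<noteq> \<infinity>" by auto
  with False obtain a0 where a0: "a = ereal a0" by (cases a) auto
  then have "eventually P (at_right a0)" using ev by (simp add: at_left_end_def)
  then obtain b1 where b1: "b1 > a0" "\<forall>y>a0. y < b1 \<longrightarrow> P y"
    unfolding eventually_at_right_field by blast
  have xa: "a0 < x" using x a0 by (simp add: ointerval_def)
  define y0 where "y0 = (a0 + min b1 x) / 2"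
  have y0: "a0 < y0" "y0 < b1" "y0 < x" unfolding y0_def by (cases "b1 \<le> x") (use b1(1) xa in \<open>simp_all add: min_def\<close>)
  have I0: "y0 \<in> ointerval a b"
    using ointerval_downward_closed[OF x] a0 y0(1,3) by simp
  have P0: "\<forall>y. a < ereal y \<and> y \<le> y0 \<longrightarrow> P y"
  proof (intro allI impI)
    fix y assume "a < ereal y \<and> y \<le> y0"
    then have "a0 < y" "y < b1" using a0 y0 by auto
    then show "P y" using b1(2) by blast
  qed
  show ?thesis by (rule that[OF I0 y0(3)]) (use P0 in blast)
qed

lemma eventually_at_left_end_ointerval:
  assumes x: "x \<in> ointerval a b"
  shows "eventually (\<lambda>y. y \<in> ointerval a b \<and> y < x) (at_left_end a)"
proof -
  have ax: "a < ereal x" using x by (simp add: ointerval_def)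
  have below: "y \<in> ointerval a b" if "a < ereal y" "y < x" for y
    using ointerval_downward_closed[OF x] that by simp
  show ?thesis
  proof (cases "a = -\<infinity>")
    case True
    have "eventually (\<lambda>y. y < x) at_bot" by (rule eventually_at_bot_linorderI[of "x - 1"]) simp
    then have "eventually (\<lambda>y. y \<in> ointerval a b \<and> y < x) at_bot"
      by (rule eventually_mono) (use below True in auto)
    then show ?thesis using True by (simp add: at_left_end_def)
  next
    case False
    have "a \<noteq> \<infinity>" using ax by auto
    with False obtain a0 where a0: "a = ereal a0" by (cases a) auto
    have xa: "a0 < x" using ax a0 by simp
    have "eventually (\<lambda>y. a0 < y \<and> y < x) (at_right a0)"
      unfolding eventually_at_right_field using xa by blast
    then have "eventually (\<lambda>y. y \<in> ointerval a b \<and> y < x) (at_right a0)"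
      by (rule eventually_mono) (use below a0 in auto)
    then show ?thesis using a0 by (simp add: at_left_end_def)
  qed
qed

lemma tendsto_at_left_end_eventually_const:
  fixes f :: "real \<Rightarrow> 'a::t2_space"
  assumes x: "x \<in> ointerval a b" and const: "\<And>y. y \<in> ointerval a b \<Longrightarrow> y \<le> x \<Longrightarrow> f y = f x"
    and lim: "(f \<longlongrightarrow> L) (at_left_end a)"
  shows "f x = L"
proof -
  have "eventually (\<lambda>y. f y = f x) (at_left_end a)"
    using eventually_at_left_end_ointerval[OF x] by (rule eventually_mono) (use const in force)
  then have "(f \<longlongrightarrow> f x) (at_left_end a)" by (rule tendsto_eventually)
  from tendsto_unique[OF at_left_end_neq_bot[of a] this lim] show ?thesis .
qed

lemma nn_integral_indicator_Icc_continuous: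
  fixes f :: "real \<Rightarrow> real"
  assumes cont: "continuous_on {u..v} f" and nn: "\<And>x. x \<in> {u..v} \<Longrightarrow> 0 \<le> f x"
  shows "(\<integral>\<^sup>+ x. ennreal (f x) * indicator {u..v} x \<partial>lborel) = ennreal (integral {u..v} f)"
proof (rule nn_integral_has_integral_lebesgue')
  show "\<And>x. x \<in> {u..v} \<Longrightarrow> 0 \<le> f x" by (rule nn)
  show "(f has_integral integral {u..v} f) {u..v}"
    using integrable_continuous_real[OF cont] by (rule integrable_integral)
qed

lemma integral_le_iterated_nn_integral:
  fixes p r h :: "real \<Rightarrow> real"
  assumes T: "(\<integral>\<^sup>+ y\<in>{y. a < ereal y \<and> y < c}.
          (\<integral>\<^sup>+ x\<in>{y..c}. ennreal (1 / p x) \<partial>lborel) * ennreal (r y) \<partial>lborel) \<le> ennreal M"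
    and M: "M \<ge> 0" and ty: "t \<le> y0" and yc: "y0 < c" and at: "a < ereal t"
    and pcont: "continuous_on {t..c} (\<lambda>x. 1 / p x)" and ppos: "\<And>x. x \<in> {t..c} \<Longrightarrow> p x > 0"
    and rpos: "\<And>x. x \<in> {t..c} \<Longrightarrow> r x > 0"
    and hcont: "continuous_on {t..y0} h" and hnn: "\<And>y. y \<in> {t..y0} \<Longrightarrow> 0 \<le> h y"
    and hle: "\<And>y. y \<in> {t..y0} \<Longrightarrow> h y \<le> integral {y..c} (\<lambda>x. 1 / p x) * r y"
  shows "integral {t..y0} h \<le> M"
proof -
  have inner: "(\<integral>\<^sup>+ x\<in>{y..c}. ennreal (1 / p x) \<partial>lborel) = ennreal (integral {y..c} (\<lambda>x. 1 / p x))"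
    if y: "y \<in> {t..y0}" for y
  proof (rule nn_integral_indicator_Icc_continuous)
    show "continuous_on {y..c} (\<lambda>x. 1 / p x)" by (rule continuous_on_subset[OF pcont]) (use y in auto)
    fix x assume "x \<in> {y..c}"
    then have "p x > 0" using y by (intro ppos) auto
    then show "0 \<le> 1 / p x" by simp
  qed
  have "ennreal (integral {t..y0} h) = (\<integral>\<^sup>+ y. ennreal (h y) * indicator {t..y0} y \<partial>lborel)"
    by (rule nn_integral_indicator_Icc_continuous[symmetric, OF hcont hnn])
  also have "\<dots> \<le> (\<integral>\<^sup>+ y. (\<integral>\<^sup>+ x\<in>{y..c}. ennreal (1 / p x) \<partial>lborel) * ennreal (r y) * indicator {y. a < ereal y \<and> y < c} y \<partial>lborel)"
  proof (rule nn_integral_mono)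
    fix y :: real
    show "ennreal (h y) * indicator {t..y0} y \<le> (\<integral>\<^sup>+ x\<in>{y..c}. ennreal (1 / p x) \<partial>lborel) * ennreal (r y) * indicator {y. a < ereal y \<and> y < c} y"
    proof (cases "y \<in> {t..y0}")
      case True
      have ay: "a < ereal y" using at True by (auto intro: less_le_trans)
      have yc': "y < c" using True yc by auto
      have ry: "r y > 0" using True yc by (intro rpos) auto
      have int_nn: "0 \<le> integral {y..c} (\<lambda>x. 1 / p x)"
      proof (rule integral_nonneg)
        show "(\<lambda>x. 1 / p x) integrable_on {y..c}"
          by (rule integrable_continuous_real, rule continuous_on_subset[OF pcont]) (use True in auto)
        fix x assume "x \<in> {y..c}"
        then have "p x > 0" using True by (intro ppos) auto
        then show "0 \<le> 1 / p x" by simp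
      qed
      have "ennreal (h y) \<le> ennreal (integral {y..c} (\<lambda>x. 1 / p x) * r y)"
        using hle[OF True] by (rule ennreal_leI)
      also have "\<dots> = ennreal (integral {y..c} (\<lambda>x. 1 / p x)) * ennreal (r y)"
        using int_nn ry by (simp add: ennreal_mult)
      finally show ?thesis using True ay yc' inner[OF True] by simp
    next
      case False
      then show ?thesis by simp
    qed
  qed
  also have "\<dots> \<le> ennreal M" using T by simp
  finally have "ennreal (integral {t..y0} h) \<le> ennreal M" .
  then show ?thesis using M by (simp add: ennreal_le_iff)
qed

section \<open>The energy argument\<close>

definition sl_energy ::
  "real \<Rightarrow> (real \<Rightarrow> real) \<Rightarrow> (real \<Rightarrow> real) \<Rightarrow> (real \<Rightarrow> complex) \<Rightarrow> (real \<Rightarrow> complex) \<Rightarrow> real \<Rightarrow> real"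
  where "sl_energy lam p r w w1 t = (cmod (w t))\<^sup>2 + (cmod (w1 t))\<^sup>2 / (lam * (p t * r t))"

lemma sl_energy_Re_Im: "sl_energy lam p r w w1 = (\<lambda>t. Re (w t) * Re (w t) + Im (w t) * Im (w t) +
    (1 / lam) * ((Re (w1 t) * Re (w1 t) + Im (w1 t) * Im (w1 t)) * (1 / (p t * r t))))"
  unfolding sl_energy_def cmod_power2 by (simp add: fun_eq_iff power2_eq_square)

locale sl_equation_ae =
  fixes a b :: ereal and p r :: "real \<Rightarrow> real" and lam :: real and w w1 :: "real \<Rightarrow> complex"
    and N :: "real set"
  assumes p_pos: "\<And>x. x \<in> ointerval a b \<Longrightarrow> p x > 0"
    and r_pos: "\<And>x. x \<in> ointerval a b \<Longrightarrow> r x > 0"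
    and p_ac: "locally_ac_on (ointerval a b) p"
    and r_ac: "locally_ac_on (ointerval a b) r"
    and w_ac: "locally_ac_on (ointerval a b) w"
    and w1_ac: "locally_ac_on (ointerval a b) w1"
    and negligible_N: "negligible N"
    and w_deriv: "\<And>x. x \<in> ointerval a b \<Longrightarrow> x \<notin> N \<Longrightarrow>
      (w has_vector_derivative w1 x / complex_of_real (p x)) (at x)"
    and w1_deriv: "\<And>x. x \<in> ointerval a b \<Longrightarrow> x \<notin> N \<Longrightarrow>
      (w1 has_vector_derivative - (complex_of_real lam * complex_of_real (r x) * w x)) (at x)"

lemma sl_solution_imp_sl_equation_ae:
  assumes "\<forall>x\<in>ointerval a b. p x > 0" "\<forall>x\<in>ointerval a b. r x > 0"
    "locally_ac_on (ointerval a b) p" "locally_ac_on (ointerval a b) r"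
    and sol: "sl_solution a b p r (complex_of_real lam) w w1"
  obtains N where "sl_equation_ae a b p r lam w w1 N"
proof -
  have "AE x in lebesgue. x \<in> ointerval a b \<longrightarrow>
        (w has_vector_derivative w1 x / complex_of_real (p x)) (at x) \<and>
        (w1 has_vector_derivative - (complex_of_real lam * complex_of_real (r x) * w x)) (at x)"
    using sol unfolding sl_solution_def by (auto elim!: eventually_rev_mp)
  then obtain N where "N \<in> null_sets lebesgue" and N: "{x \<in> space lebesgue. \<not> (x \<in> ointerval a b \<longrightarrow>
        (w has_vector_derivative w1 x / complex_of_real (p x)) (at x) \<and>
        (w1 has_vector_derivative - (complex_of_real lam * complex_of_real (r x) * w x)) (at x))} \<subseteq> N"
    unfolding eventually_ae_filter by blast
  show ?thesis
  proof (rule that, unfold_locales)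
    show "negligible N" using \<open>N \<in> null_sets lebesgue\<close> by (simp add: negligible_iff_null_sets)
  qed (use assms N in \<open>auto simp: sl_solution_def\<close>)
qed

context sl_equation_ae
begin

lemma w1_constant_of_lam_zero:
  assumes "lam = 0" "y \<in> ointerval a b" "x \<in> ointerval a b" "y \<le> x"
  shows "w1 x = w1 y"
proof (rule absolutely_continuous_on_deriv_zero_imp_eq[OF assms(4) locally_ac_on_ointervalD[OF w1_ac assms(2,3)] negligible_N])
  fix s assume "s \<in> {y<..<x}" "s \<notin> N"
  then have "s \<in> ointerval a b" using ointerval_Icc_subset[OF assms(2,3)] by auto
  with w1_deriv[OF this \<open>s \<notin> N\<close>] assms(1) show "(w1 has_vector_derivative 0) (at s)" by simp
qed

lemma norm_w_le_one_of_lam_zero: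
  assumes "lam = 0" and w_lim: "(w \<longlongrightarrow> 1) (at_left_end a)" and w1_lim: "(w1 \<longlongrightarrow> 0) (at_left_end a)"
    and x0: "x0 \<in> ointerval a b"
  shows "norm (w x0) \<le> 1"
proof -
  have w1_zero: "w1 x = 0" if x: "x \<in> ointerval a b" for x
    using tendsto_at_left_end_eventually_const[OF x _ w1_lim] w1_constant_of_lam_zero[OF \<open>lam = 0\<close> _ x]
    by metis
  have "w x = w y" if y: "y \<in> ointerval a b" and x: "x \<in> ointerval a b" and "y \<le> x" for x y
  proof (rule absolutely_continuous_on_deriv_zero_imp_eq[OF \<open>y \<le> x\<close> locally_ac_on_ointervalD[OF w_ac y x] negligible_N])
    fix s assume "s \<in> {y<..<x}" "s \<notin> N"
    then have "s \<in> ointerval a b" using ointerval_Icc_subset[OF y x] by auto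
    with w_deriv[OF this \<open>s \<notin> N\<close>] w1_zero show "(w has_vector_derivative 0) (at s)" by simp
  qed
  then have "w x0 = 1"
    by (intro tendsto_at_left_end_eventually_const[OF x0 _ w_lim]) (metis x0)
  then show ?thesis by simp
qed

lemma energy_has_derivative:
  assumes "lam \<noteq> 0" "s \<in> ointerval a b" "s \<notin> N"
    and P: "(p has_real_derivative P1) (at s)" and R: "(r has_real_derivative R1) (at s)"
  shows "(sl_energy lam p r w w1 has_real_derivative
      - (cmod (w1 s))\<^sup>2 * (P1 * r s + p s * R1) / (lam * (p s * r s)\<^sup>2)) (at s)"
proof -
  have ps: "p s > 0" and rs: "r s > 0" using p_pos r_pos assms(2) by auto
  have dw: "(w has_vector_derivative w1 s / complex_of_real (p s)) (at s)"
    and dw1: "(w1 has_vector_derivative - (complex_of_real lam * complex_of_real (r s) * w s)) (at s)"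
    using w_deriv w1_deriv assms(2,3) by auto
  have Rw: "((\<lambda>t. Re (w t)) has_real_derivative Re (w1 s) / p s) (at s)"
    and Iw: "((\<lambda>t. Im (w t)) has_real_derivative Im (w1 s) / p s) (at s)"
    using has_field_derivative_Re[OF dw] has_field_derivative_Im[OF dw] by simp_all
  have Rw1: "((\<lambda>t. Re (w1 t)) has_real_derivative - (lam * r s * Re (w s))) (at s)"
    and Iw1: "((\<lambda>t. Im (w1 t)) has_real_derivative - (lam * r s * Im (w s))) (at s)"
    using has_field_derivative_Re[OF dw1] has_field_derivative_Im[OF dw1] by simp_all
  have inv: "((\<lambda>t. 1 / (p t * r t)) has_real_derivative
      (0 * (p s * r s) - 1 * (P1 * r s + p s * R1)) / (p s * r s * (p s * r s))) (at s)"
    using ps rs by (intro DERIV_divide DERIV_const DERIV_cong[OF DERIV_mult[OF P R]]) simp_all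
  define A1 where "A1 = Re (w1 s) / p s"
  define A2 where "A2 = Im (w1 s) / p s"
  define B1 where "B1 = - (lam * r s * Re (w s))"
  define B2 where "B2 = - (lam * r s * Im (w s))"
  define Q where "Q = (0 * (p s * r s) - 1 * (P1 * r s + p s * R1)) / (p s * r s * (p s * r s))"
  have "(sl_energy lam p r w w1 has_real_derivative
     ((A1 * Re (w s) + A1 * Re (w s)) + (A2 * Im (w s) + A2 * Im (w s))
      + (1/lam) * (((B1 * Re (w1 s) + B1 * Re (w1 s)) + (B2 * Im (w1 s) + B2 * Im (w1 s))) * (1 / (p s * r s))
         + Q * (Re (w1 s) * Re (w1 s) + Im (w1 s) * Im (w1 s))))) (at s)"
    unfolding sl_energy_Re_Im A1_def A2_def B1_def B2_def Q_def
    by (intro DERIV_add DERIV_mult DERIV_cmult Rw Iw Rw1 Iw1 inv)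
  moreover have "(cmod (w1 s))\<^sup>2 = Re (w1 s) * Re (w1 s) + Im (w1 s) * Im (w1 s)"
    unfolding cmod_power2 by (simp add: power2_eq_square)
  ultimately show ?thesis
    by (elim DERIV_cong) (use ps rs \<open>lam \<noteq> 0\<close> in \<open>simp add: A1_def A2_def B1_def B2_def Q_def field_simps power2_eq_square\<close>)
qed

lemma energy_absolutely_continuous_on:
  assumes "y \<in> ointerval a b" "x \<in> ointerval a b"
  shows "absolutely_continuous_on {y..x} (sl_energy lam p r w w1)"
proof -
  note ac = locally_ac_on_ointervalD[OF _ assms]
  have "t \<in> {y..x} \<Longrightarrow> p t * r t > 0" for t
    using ointerval_Icc_subset[OF assms] p_pos r_pos by (simp add: subset_iff)
  then show ?thesis
    unfolding sl_energy_Re_Im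
    by (intro absolutely_continuous_on_add absolutely_continuous_on_cmult absolutely_continuous_on_mult
        absolutely_continuous_on_inverse absolutely_continuous_on_Re absolutely_continuous_on_Im
        ac[OF w_ac] ac[OF w1_ac] ac[OF p_ac] ac[OF r_ac])
qed

lemma energy_antimono:
  assumes "lam > 0"
    and p': "\<And>x. x \<in> ointerval a b \<Longrightarrow> (p has_real_derivative p' x) (at x)"
    and r': "\<And>x. x \<in> ointerval a b \<Longrightarrow> (r has_real_derivative r' x) (at x)"
    and incr: "mono_on (ointerval a b) (\<lambda>x. p x * r x)"
    and y: "y \<in> ointerval a b" and x: "x \<in> ointerval a b" and "y \<le> x"
  shows "sl_energy lam p r w w1 x \<le> sl_energy lam p r w w1 y"
proof (rule absolutely_continuous_on_deriv_nonpos_imp_le[OF \<open>y \<le> x\<close> energy_absolutely_continuous_on[OF y x] negligible_N])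
  fix s assume "s \<in> {y<..<x}" "s \<notin> N"
  then have s: "s \<in> ointerval a b" using ointerval_Icc_subset[OF y x] by auto
  have "((\<lambda>t. p t * r t) has_real_derivative (p' s * r s + p s * r' s)) (at s)"
    by (rule DERIV_cong[OF DERIV_mult[OF p'[OF s] r'[OF s]]]) simp
  then have "p' s * r s + p s * r' s \<ge> 0"
    by (rule mono_on_ointerval_deriv_nonneg[OF incr s])
  then have "- (cmod (w1 s))\<^sup>2 * (p' s * r s + p s * r' s) / (lam * (p s * r s)\<^sup>2) \<le> 0"
    using \<open>lam > 0\<close> by (simp add: divide_nonpos_pos mult_nonneg_nonneg)
  with energy_has_derivative[OF _ s \<open>s \<notin> N\<close> p'[OF s] r'[OF s]] \<open>lam > 0\<close>
  show "\<exists>D. (sl_energy lam p r w w1 has_real_derivative D) (at s) \<and> D \<le> 0" by blast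
qed

lemma norm_w1_has_derivative_le:
  assumes "lam > 0" "s \<in> ointerval a b" "s \<notin> N" "w1 s \<noteq> 0" "cmod (w s) \<le> 2"
  obtains U where "((\<lambda>t. cmod (w1 t)) has_real_derivative U) (at s)" "\<bar>U\<bar> \<le> 2 * lam * r s"
proof -
  obtain U where U: "((\<lambda>t. cmod (w1 t)) has_real_derivative U) (at s)"
      "\<bar>U\<bar> \<le> cmod (- (complex_of_real lam * complex_of_real (r s) * w s))"
    using has_real_derivative_norm_le[OF w1_deriv[OF assms(2,3)] assms(4)] by blast
  have "cmod (- (complex_of_real lam * complex_of_real (r s) * w s)) = lam * r s * cmod (w s)"
    using assms(1) r_pos[OF assms(2)] by (simp add: norm_mult)
  also have "\<dots> \<le> lam * r s * 2"
    using assms(1,5) r_pos[OF assms(2)] by (intro mult_left_mono) auto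
  finally show ?thesis using U by (intro that) auto
qed

lemma continuous_on_inverse_p:
  assumes "t \<in> ointerval a b" "c \<in> ointerval a b"
  shows "continuous_on {t..c} (\<lambda>x. 1 / p x)"
  using ointerval_Icc_subset[OF assms] p_pos
  by (intro continuous_on_divide continuous_on_const locally_ac_on_ointerval_continuous_on[OF p_ac assms])
    force

lemma inverse_norm_w1_le:
  assumes "lam > 0" "\<eta> > 0" and t: "t \<in> ointerval a b" and y0: "y0 \<in> ointerval a b" and "t \<le> y0"
    and w_le: "\<And>s. s \<in> {t..y0} \<Longrightarrow> cmod (w s) \<le> 2"
    and w1_pos: "\<And>s. s \<in> {t..y0} \<Longrightarrow> cmod (w1 s) > 0"
    and w1_large: "\<And>s. s \<in> {t..y0} \<Longrightarrow> 2 * \<eta> * lam * (p s * r s) \<le> (cmod (w1 s))\<^sup>2"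
  shows "\<eta> / cmod (w1 t) \<le> integral {t..y0} (\<lambda>x. 1 / p x) + \<eta> / cmod (w1 y0)"
proof -
  have sub: "{t..y0} \<subseteq> ointerval a b" by (rule ointerval_Icc_subset[OF t y0])
  note cont = continuous_on_inverse_p[OF t y0]
  define G where "G s = (- 1) * integral {t..s} (\<lambda>x. 1 / p x) + (- \<eta>) * (1 / cmod (w1 s))" for s
  have "G y0 \<le> G t"
  proof (rule absolutely_continuous_on_deriv_nonpos_imp_le[OF \<open>t \<le> y0\<close> _ negligible_N])
    show "absolutely_continuous_on {t..y0} G"
      unfolding G_def
      by (intro absolutely_continuous_on_add absolutely_continuous_on_cmult absolutely_continuous_on_integral cont
          absolutely_continuous_on_inverse absolutely_continuous_on_norm locally_ac_on_ointervalD[OF w1_ac t y0] w1_pos)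
    fix s assume s: "s \<in> {t<..<y0}" "s \<notin> N"
    then have sI: "s \<in> ointerval a b" and s': "s \<in> {t..y0}" using sub by auto
    obtain U where U: "((\<lambda>t. cmod (w1 t)) has_real_derivative U) (at s)" "\<bar>U\<bar> \<le> 2 * lam * r s"
      using norm_w1_has_derivative_le[OF \<open>lam > 0\<close> sI s(2) _ w_le[OF s']] w1_pos[OF s'] by auto
    have "(G has_real_derivative (- 1) * (1 / p s) + (- \<eta>) * ((0 * cmod (w1 s) - 1 * U) / (cmod (w1 s) * cmod (w1 s)))) (at s)"
      unfolding G_def using w1_pos[OF s']
      by (intro DERIV_add DERIV_cmult integral_has_real_derivative_interior[OF cont s(1)]
          DERIV_divide[OF DERIV_const U(1)]) auto
    moreover have "(- 1) * (1 / p s) + (- \<eta>) * ((0 * cmod (w1 s) - 1 * U) / (cmod (w1 s) * cmod (w1 s))) \<le> 0"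
    proof -
      have ps: "p s > 0" using p_pos sI by blast
      have "\<eta> * U \<le> \<eta> * (2 * lam * r s)" using U(2) \<open>\<eta> > 0\<close> by (intro mult_left_mono) auto
      also have "\<dots> = (2 * \<eta> * lam * (p s * r s)) / p s" using ps by (simp add: field_simps)
      also have "\<dots> \<le> (cmod (w1 s))\<^sup>2 / p s" using w1_large[OF s'] ps by (intro divide_right_mono) auto
      finally have "\<eta> * U / (cmod (w1 s))\<^sup>2 \<le> 1 / p s"
        using w1_pos[OF s'] by (simp add: divide_simps)
      then show ?thesis by (simp add: power2_eq_square)
    qed
    ultimately show "\<exists>D. (G has_real_derivative D) (at s) \<and> D \<le> 0" by blast
  qed
  then show ?thesis by (simp add: G_def)
qed

lemma ln_norm_w1_le:
  assumes "lam > 0" and t: "t \<in> ointerval a b" and y0: "y0 \<in> ointerval a b" and "t \<le> y0"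
    and w_le: "\<And>s. s \<in> {t..y0} \<Longrightarrow> cmod (w s) \<le> 2"
    and w1_pos: "\<And>s. s \<in> {t..y0} \<Longrightarrow> cmod (w1 s) > 0"
  shows "ln (cmod (w1 y0)) - ln (cmod (w1 t)) \<le> 2 * lam * integral {t..y0} (\<lambda>s. r s / cmod (w1 s))"
proof -
  have sub: "{t..y0} \<subseteq> ointerval a b" by (rule ointerval_Icc_subset[OF t y0])
  have cont: "continuous_on {t..y0} (\<lambda>s. r s / cmod (w1 s))"
    using w1_pos
    by (intro continuous_on_divide locally_ac_on_ointerval_continuous_on[OF r_ac t y0]
        absolutely_continuous_on_imp_continuous_on[OF absolutely_continuous_on_norm[OF locally_ac_on_ointervalD[OF w1_ac t y0]]])
      force
  define Q where "Q s = (2 * lam) * integral {t..s} (\<lambda>s. r s / cmod (w1 s)) + (- 1) * ln (cmod (w1 s))" for s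
  have "Q t \<le> Q y0"
  proof (rule absolutely_continuous_on_deriv_nonneg_imp_le[OF \<open>t \<le> y0\<close> _ negligible_N])
    show "absolutely_continuous_on {t..y0} Q"
      unfolding Q_def
      by (intro absolutely_continuous_on_add absolutely_continuous_on_cmult absolutely_continuous_on_integral cont
          absolutely_continuous_on_ln absolutely_continuous_on_norm locally_ac_on_ointervalD[OF w1_ac t y0] w1_pos)
    fix s assume s: "s \<in> {t<..<y0}" "s \<notin> N"
    then have sI: "s \<in> ointerval a b" and s': "s \<in> {t..y0}" using sub by auto
    obtain U where U: "((\<lambda>t. cmod (w1 t)) has_real_derivative U) (at s)" "\<bar>U\<bar> \<le> 2 * lam * r s"
      using norm_w1_has_derivative_le[OF \<open>lam > 0\<close> sI s(2) _ w_le[OF s']] w1_pos[OF s'] by auto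
    have "(Q has_real_derivative (2 * lam) * (r s / cmod (w1 s)) + (- 1) * (1 / cmod (w1 s) * U)) (at s)"
      unfolding Q_def
      by (intro DERIV_add DERIV_cmult integral_has_real_derivative_interior[OF cont s(1)]
          DERIV_chain2[OF DERIV_ln_divide[OF w1_pos[OF s']] U(1)])
    moreover have "0 \<le> (2 * lam) * (r s / cmod (w1 s)) + (- 1) * (1 / cmod (w1 s) * U)"
      using U(2) w1_pos[OF s'] by (simp add: divide_simps)
    ultimately show "\<exists>D. (Q has_real_derivative D) (at s) \<and> D \<ge> 0" by blast
  qed
  then show ?thesis by (simp add: Q_def)
qed

lemma norm_w1_large_near_left_end:
  assumes "lam > 0"
    and p': "\<And>x. x \<in> ointerval a b \<Longrightarrow> (p has_real_derivative p' x) (at x)"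
    and r': "\<And>x. x \<in> ointerval a b \<Longrightarrow> (r has_real_derivative r' x) (at x)"
    and incr: "mono_on (ointerval a b) (\<lambda>x. p x * r x)"
    and x0: "x0 \<in> ointerval a b" "cmod (w x0) > 1" and w_lim: "(w \<longlongrightarrow> 1) (at_left_end a)"
    and z: "z \<in> ointerval a b" "z \<le> x0"
  obtains \<eta> y0 where "\<eta> > 0" "y0 \<in> ointerval a b" "y0 < z"
    "\<And>y. a < ereal y \<Longrightarrow> y \<le> y0 \<Longrightarrow> y \<in> ointerval a b \<and> cmod (w y) \<le> 2 \<and> cmod (w1 y) > 0 \<and>
      2 * \<eta> * lam * (p y * r y) \<le> (cmod (w1 y))\<^sup>2"
proof -
  define \<eta> where "\<eta> = ((cmod (w x0))\<^sup>2 - 1) / 3"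
  have "\<eta> > 0" using x0(2) by (simp add: \<eta>_def one_less_power)
  have w_lim': "((\<lambda>t. cmod (w t)) \<longlongrightarrow> 1) (at_left_end a)"
    using tendsto_norm[OF w_lim] by simp
  have "eventually (\<lambda>t. (cmod (w t))\<^sup>2 < 1 + \<eta>) (at_left_end a)"
    using order_tendstoD(2)[OF tendsto_power[OF w_lim', of 2], of "1 + \<eta>"] \<open>\<eta> > 0\<close> by simp
  moreover have "eventually (\<lambda>t. cmod (w t) < 2) (at_left_end a)"
    using order_tendstoD(2)[OF w_lim', of 2] by simp
  ultimately obtain y0 where y0: "y0 \<in> ointerval a b" "y0 < z"
    and w_near: "\<And>y. a < ereal y \<Longrightarrow> y \<le> y0 \<Longrightarrow> (cmod (w y))\<^sup>2 < 1 + \<eta> \<and> cmod (w y) < 2"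
    using eventually_at_left_end_initial_segment[OF eventually_conj z(1)] by blast
  show ?thesis
  proof (rule that[OF \<open>\<eta> > 0\<close> y0])
    fix y assume "a < ereal y" "y \<le> y0"
    then have y: "y \<in> ointerval a b" by (rule ointerval_downward_closed[OF y0(1)])
    have py: "p y > 0" and ry: "r y > 0" using y p_pos r_pos by auto
    \<comment> \<open>The energy does not increase, so it stays above \<open>|w x0|\<^sup>2 = 1 + 3\<eta>\<close> left of \<open>x0\<close>,
      while \<open>|w y|\<^sup>2 < 1 + \<eta>\<close> there; the quasi-derivative must make up the difference.\<close>
    have "(cmod (w x0))\<^sup>2 \<le> sl_energy lam p r w w1 x0"
      using \<open>lam > 0\<close> p_pos[OF x0(1)] r_pos[OF x0(1)] by (simp add: sl_energy_def)
    also have "\<dots> \<le> sl_energy lam p r w w1 y"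
      using \<open>y \<le> y0\<close> y0 z(2) by (intro energy_antimono[OF \<open>lam > 0\<close> p' r' incr y x0(1)]) auto
    finally have "(cmod (w x0))\<^sup>2 \<le> (cmod (w y))\<^sup>2 + (cmod (w1 y))\<^sup>2 / (lam * (p y * r y))"
      by (simp add: sl_energy_def)
    then have "2 * \<eta> < (cmod (w1 y))\<^sup>2 / (lam * (p y * r y))"
      using w_near[OF \<open>a < ereal y\<close> \<open>y \<le> y0\<close>, THEN conjunct1] unfolding \<eta>_def by argo
    then have large: "2 * \<eta> * lam * (p y * r y) < (cmod (w1 y))\<^sup>2"
      using \<open>lam > 0\<close> py ry by (simp add: pos_less_divide_eq mult.assoc)
    moreover have "0 < 2 * \<eta> * lam * (p y * r y)" using \<open>\<eta> > 0\<close> \<open>lam > 0\<close> py ry by simp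
    ultimately show "y \<in> ointerval a b \<and> cmod (w y) \<le> 2 \<and> cmod (w1 y) > 0 \<and>
      2 * \<eta> * lam * (p y * r y) \<le> (cmod (w1 y))\<^sup>2"
      using y w_near[OF \<open>a < ereal y\<close> \<open>y \<le> y0\<close>] by auto
  qed
qed

lemma integral_r_over_norm_w1_le:
  assumes "lam > 0" "\<eta> > 0" and c: "c \<in> ointerval a b"
    and fin: "(\<integral>\<^sup>+ y\<in>{y. a < ereal y \<and> y < c}.
      (\<integral>\<^sup>+ x\<in>{y..c}. ennreal (1 / p x) \<partial>lborel) * ennreal (r y) \<partial>lborel) < \<infinity>"
    and y0: "y0 \<in> ointerval a b" "y0 < c"
    and near: "\<And>y. a < ereal y \<Longrightarrow> y \<le> y0 \<Longrightarrow> y \<in> ointerval a b \<and> cmod (w y) \<le> 2 \<and>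
      cmod (w1 y) > 0 \<and> 2 * \<eta> * lam * (p y * r y) \<le> (cmod (w1 y))\<^sup>2"
    and boundary: "\<eta> / cmod (w1 y0) \<le> integral {y0..c} (\<lambda>x. 1 / p x)"
    and t: "a < ereal t" "t \<le> y0"
  shows "\<eta> * integral {t..y0} (\<lambda>y. r y / cmod (w1 y)) \<le> enn2real (\<integral>\<^sup>+ y\<in>{y. a < ereal y \<and> y < c}.
      (\<integral>\<^sup>+ x\<in>{y..c}. ennreal (1 / p x) \<partial>lborel) * ennreal (r y) \<partial>lborel)" (is "_ \<le> ?M")
proof -
  have tI: "t \<in> ointerval a b" using near t by blast
  have near': "y \<in> ointerval a b \<and> cmod (w y) \<le> 2 \<and> cmod (w1 y) > 0 \<and>
      2 * \<eta> * lam * (p y * r y) \<le> (cmod (w1 y))\<^sup>2" if "y \<in> {t..y0}" for y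
  proof -
    have "a < ereal y" using t(1) that by (auto intro: less_le_trans)
    with near that show ?thesis by simp
  qed
  have inverse_bound: "\<eta> / cmod (w1 y) \<le> integral {y..c} (\<lambda>x. 1 / p x)" if y: "y \<in> {t..y0}" for y
  proof -
    have yI: "y \<in> ointerval a b" using near' y by blast
    have "\<eta> / cmod (w1 y) \<le> integral {y..y0} (\<lambda>x. 1 / p x) + \<eta> / cmod (w1 y0)"
      using y near' by (intro inverse_norm_w1_le[OF \<open>lam > 0\<close> \<open>\<eta> > 0\<close> yI y0(1)]) auto
    moreover have "integral {y..y0} (\<lambda>x. 1 / p x) + integral {y0..c} (\<lambda>x. 1 / p x) = integral {y..c} (\<lambda>x. 1 / p x)"
      using y \<open>y0 < c\<close>
      by (intro Henstock_Kurzweil_Integration.integral_combine integrable_continuous_real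
          continuous_on_inverse_p[OF yI c]) auto
    ultimately show ?thesis using boundary by linarith
  qed
  have "integral {t..y0} (\<lambda>y. \<eta> * (r y / cmod (w1 y))) \<le> ?M"
  proof (intro integral_le_iterated_nn_integral[OF _ _ t(2) \<open>y0 < c\<close> t(1) continuous_on_inverse_p[OF tI c]])
    show "(\<integral>\<^sup>+ y\<in>{y. a < ereal y \<and> y < c}.
        (\<integral>\<^sup>+ x\<in>{y..c}. ennreal (1 / p x) \<partial>lborel) * ennreal (r y) \<partial>lborel) \<le> ennreal ?M"
      using fin by (simp add: ennreal_enn2real)
    show "continuous_on {t..y0} (\<lambda>y. \<eta> * (r y / cmod (w1 y)))"
      using near'
      by (intro continuous_on_mult continuous_on_const continuous_on_divide
          locally_ac_on_ointerval_continuous_on[OF r_ac tI y0(1)]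
          absolutely_continuous_on_imp_continuous_on[OF absolutely_continuous_on_norm[OF locally_ac_on_ointervalD[OF w1_ac tI y0(1)]]])
        force
    fix y assume y: "y \<in> {t..y0}"
    then have "r y > 0" "cmod (w1 y) > 0" using near' r_pos by auto
    then show "0 \<le> \<eta> * (r y / cmod (w1 y))" using \<open>\<eta> > 0\<close> by simp
    show "\<eta> * (r y / cmod (w1 y)) \<le> integral {y..c} (\<lambda>x. 1 / p x) * r y"
      using mult_right_mono[OF inverse_bound[OF y], of "r y"] \<open>r y > 0\<close> by simp
  next
    fix x assume "x \<in> {t..c}"
    then have "x \<in> ointerval a b" using ointerval_Icc_subset[OF tI c] by blast
    then show "p x > 0" "r x > 0" using p_pos r_pos by auto
  qed simp
  then show ?thesis by (simp only: integral_mult_right)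
qed

lemma ln_norm_w1_bounded_near_left_end:
  assumes "lam > 0" "\<eta> > 0" and c: "c \<in> ointerval a b"
    and fin: "(\<integral>\<^sup>+ y\<in>{y. a < ereal y \<and> y < c}.
      (\<integral>\<^sup>+ x\<in>{y..c}. ennreal (1 / p x) \<partial>lborel) * ennreal (r y) \<partial>lborel) < \<infinity>"
    and y0: "y0 \<in> ointerval a b" "y0 < c"
    and near: "\<And>y. a < ereal y \<Longrightarrow> y \<le> y0 \<Longrightarrow> y \<in> ointerval a b \<and> cmod (w y) \<le> 2 \<and>
      cmod (w1 y) > 0 \<and> 2 * \<eta> * lam * (p y * r y) \<le> (cmod (w1 y))\<^sup>2"
  obtains C where "\<And>t. a < ereal t \<Longrightarrow> t \<le> y0 \<Longrightarrow> ln (cmod (w1 y0)) - ln (cmod (w1 t)) \<le> C"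
proof -
  have w1_y0: "cmod (w1 y0) > 0" using near[of y0] y0(1) by (simp add: ointerval_def)
  define \<Phi> where "\<Phi> = integral {y0..c} (\<lambda>x. 1 / p x)"
  have "\<Phi> > 0"
  proof -
    obtain m where "m > 0" "\<And>x. x \<in> {y0..c} \<Longrightarrow> m \<le> 1 / p x"
      using continuous_on_pos_min[OF continuous_on_inverse_p[OF y0(1) c]] ointerval_Icc_subset[OF y0(1) c] p_pos
      by (metis subsetD zero_less_divide_1_iff)
    then have "integral {y0..c} (\<lambda>x. m) \<le> \<Phi>"
      unfolding \<Phi>_def by (intro integral_le integrable_continuous_real continuous_on_inverse_p[OF y0(1) c]) auto
    moreover have "(c - y0) * m > 0" using \<open>m > 0\<close> \<open>y0 < c\<close> by simp
    ultimately show ?thesis using \<open>y0 < c\<close> by simp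
  qed
  \<comment> \<open>Shrinking \<open>\<eta>\<close> makes the boundary term \<open>\<eta> / |w1 y0|\<close> small against \<open>\<integral>\<^sub>y\<^sub>0\<^sup>c 1/p\<close>.\<close>
  define \<eta>' where "\<eta>' = min \<eta> (\<Phi> * cmod (w1 y0))"
  have "\<eta>' > 0" using \<open>\<eta> > 0\<close> \<open>\<Phi> > 0\<close> w1_y0 by (simp add: \<eta>'_def)
  have near': "y \<in> ointerval a b \<and> cmod (w y) \<le> 2 \<and> cmod (w1 y) > 0 \<and>
      2 * \<eta>' * lam * (p y * r y) \<le> (cmod (w1 y))\<^sup>2" if "a < ereal y" "y \<le> y0" for y
  proof -
    have "y \<in> ointerval a b" "2 * \<eta> * lam * (p y * r y) \<le> (cmod (w1 y))\<^sup>2"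
      using near[OF that] by auto
    moreover have "2 * \<eta>' * lam * (p y * r y) \<le> 2 * \<eta> * lam * (p y * r y)"
      using \<open>lam > 0\<close> p_pos[OF \<open>y \<in> ointerval a b\<close>] r_pos[OF \<open>y \<in> ointerval a b\<close>]
      by (intro mult_right_mono) (auto simp: \<eta>'_def)
    ultimately show ?thesis using near[OF that] by linarith
  qed
  have boundary: "\<eta>' / cmod (w1 y0) \<le> \<Phi>"
    using w1_y0 by (simp add: \<eta>'_def divide_le_eq mult.commute)
  define M where "M = enn2real (\<integral>\<^sup>+ y\<in>{y. a < ereal y \<and> y < c}.
      (\<integral>\<^sup>+ x\<in>{y..c}. ennreal (1 / p x) \<partial>lborel) * ennreal (r y) \<partial>lborel)"
  have "ln (cmod (w1 y0)) - ln (cmod (w1 t)) \<le> 2 * lam * (M / \<eta>')" if t: "a < ereal t" "t \<le> y0" for t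
  proof -
    have "s \<in> ointerval a b \<and> cmod (w s) \<le> 2 \<and> cmod (w1 s) > 0" if "s \<in> {t..y0}" for s
    proof -
      have "a < ereal s" using t(1) that by (auto intro: less_le_trans)
      with near' that show ?thesis by simp
    qed
    then have "ln (cmod (w1 y0)) - ln (cmod (w1 t)) \<le> 2 * lam * integral {t..y0} (\<lambda>y. r y / cmod (w1 y))"
      using t(2) by (intro ln_norm_w1_le[OF \<open>lam > 0\<close> _ y0(1) t(2)]) auto
    also have "integral {t..y0} (\<lambda>y. r y / cmod (w1 y)) \<le> M / \<eta>'"
      using integral_r_over_norm_w1_le[OF \<open>lam > 0\<close> \<open>\<eta>' > 0\<close> c fin y0 near' boundary[unfolded \<Phi>_def] t]
        \<open>\<eta>' > 0\<close>
      by (simp add: M_def pos_le_divide_eq mult.commute)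
    finally show ?thesis using \<open>lam > 0\<close> by (simp add: mult_left_mono)
  qed
  then show ?thesis by (rule that)
qed

lemma norm_w_le_one_of_lam_pos:
  assumes "lam > 0"
    and p': "\<And>x. x \<in> ointerval a b \<Longrightarrow> (p has_real_derivative p' x) (at x)"
    and r': "\<And>x. x \<in> ointerval a b \<Longrightarrow> (r has_real_derivative r' x) (at x)"
    and incr: "mono_on (ointerval a b) (\<lambda>x. p x * r x)"
    and c: "c \<in> ointerval a b"
    and fin: "(\<integral>\<^sup>+ y\<in>{y. a < ereal y \<and> y < c}.
      (\<integral>\<^sup>+ x\<in>{y..c}. ennreal (1 / p x) \<partial>lborel) * ennreal (r y) \<partial>lborel) < \<infinity>"
    and w_lim: "(w \<longlongrightarrow> 1) (at_left_end a)" and w1_lim: "(w1 \<longlongrightarrow> 0) (at_left_end a)"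
    and x0: "x0 \<in> ointerval a b"
  shows "norm (w x0) \<le> 1"
proof (rule ccontr)
  assume "\<not> norm (w x0) \<le> 1"
  have "min x0 c \<in> ointerval a b" using x0 c by (simp add: min_def)
  then obtain \<eta> y0 where "\<eta> > 0" "y0 \<in> ointerval a b" "y0 < min x0 c"
    and near: "\<And>y. a < ereal y \<Longrightarrow> y \<le> y0 \<Longrightarrow> y \<in> ointerval a b \<and> cmod (w y) \<le> 2 \<and>
      cmod (w1 y) > 0 \<and> 2 * \<eta> * lam * (p y * r y) \<le> (cmod (w1 y))\<^sup>2"
    using norm_w1_large_near_left_end[OF \<open>lam > 0\<close> p' r' incr x0] \<open>\<not> norm (w x0) \<le> 1\<close> w_lim
    by (metis min.cobounded1 not_le_imp_less)
  then obtain C where C: "\<And>t. a < ereal t \<Longrightarrow> t \<le> y0 \<Longrightarrow> ln (cmod (w1 y0)) - ln (cmod (w1 t)) \<le> C"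
    using ln_norm_w1_bounded_near_left_end[OF \<open>lam > 0\<close> \<open>\<eta> > 0\<close> c fin] by auto
  have "eventually (\<lambda>t. cmod (w1 t) < exp (ln (cmod (w1 y0)) - C - 1)) (at_left_end a)"
    using order_tendstoD(2)[OF tendsto_norm[OF w1_lim]] by simp
  then obtain t where t: "t \<in> ointerval a b" "t < y0" "cmod (w1 t) < exp (ln (cmod (w1 y0)) - C - 1)"
    using eventually_happens'[OF at_left_end_neq_bot
        eventually_conj[OF eventually_at_left_end_ointerval[OF \<open>y0 \<in> ointerval a b\<close>]]]
    by blast
  have "a < ereal t" using t(1) by (simp add: ointerval_def)
  then have "cmod (w1 t) > 0" using near t(2) by simp
  with t(3) have "ln (cmod (w1 t)) < ln (cmod (w1 y0)) - C - 1"
    by (metis ln_exp ln_less_cancel_iff exp_gt_zero)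
  with C[OF \<open>a < ereal t\<close>] t(2) show False by simp
qed

end

theorem mainTheorem2:
  fixes a b :: ereal and p r :: "real \<Rightarrow> real" and c :: real
  assumes ab: "a < b"
    and p_pos: "\<forall>x\<in>ointerval a b. p x > 0"
    and r_pos: "\<forall>x\<in>ointerval a b. r x > 0"
    and p_ac: "locally_ac_on (ointerval a b) p"
    and p'_ac: "\<exists>p'. locally_ac_on (ointerval a b) p' \<and>
                 (\<forall>x\<in>ointerval a b. (p has_real_derivative p' x) (at x))"
    and r_ac: "locally_ac_on (ointerval a b) r"
    and r'_ac: "\<exists>r'. locally_ac_on (ointerval a b) r' \<and>
                 (\<forall>x\<in>ointerval a b. (r has_real_derivative r' x) (at x))"
    and c_in: "c \<in> ointerval a b"
    and integrable_end:
      "(\<integral>\<^sup>+ y\<in>{y. a < ereal y \<and> y < c}.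
          (\<integral>\<^sup>+ x\<in>{y..c}. ennreal (1 / p x) \<partial>lborel) * ennreal (r y) \<partial>lborel) < \<infinity>"
    and incr: "mono_on (ointerval a b) (\<lambda>x. p x * r x)"
  shows "\<forall>(lam::real) (w::real \<Rightarrow> complex) w1.
           lam \<ge> 0 \<and> sl_solution a b p r (complex_of_real lam) w w1 \<and>
           (w \<longlongrightarrow> 1) (at_left_end a) \<and> (w1 \<longlongrightarrow> 0) (at_left_end a)
           \<longrightarrow> (\<forall>x\<in>ointerval a b. norm (w x) \<le> 1)"
proof (intro allI impI ballI)
  fix lam :: real and w w1 :: "real \<Rightarrow> complex" and x0
  assume H: "lam \<ge> 0 \<and> sl_solution a b p r (complex_of_real lam) w w1 \<and>
           (w \<longlongrightarrow> 1) (at_left_end a) \<and> (w1 \<longlongrightarrow> 0) (at_left_end a)"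
    and x0: "x0 \<in> ointerval a b"
  obtain N where "sl_equation_ae a b p r lam w w1 N"
    using sl_solution_imp_sl_equation_ae[OF p_pos r_pos p_ac r_ac] H by blast
  then interpret sl_equation_ae a b p r lam w w1 N .
  obtain p' r' where p': "\<And>x. x \<in> ointerval a b \<Longrightarrow> (p has_real_derivative p' x) (at x)"
    and r': "\<And>x. x \<in> ointerval a b \<Longrightarrow> (r has_real_derivative r' x) (at x)"
    using p'_ac r'_ac by blast
  show "norm (w x0) \<le> 1"
  proof (cases "lam = 0")
    case True
    with H x0 show ?thesis by (intro norm_w_le_one_of_lam_zero) auto
  next
    case False
    with H have "lam > 0" by simp
    with H x0 show ?thesis by (intro norm_w_le_one_of_lam_pos[OF _ p' r' incr c_in integrable_end]) auto
  qed
qed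

end
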